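(* Let $\Omega\subset\mathbb{R}^N$ be a bounded domain of $\mathrm{C}^2$-regular class, $p>\max\{1,\frac{2N}{N+2}\}$, $q\ge2$, $\lambda,\kappa>0$, $\alpha\in\mathbb{R}$ with $|\alpha|\le\lambda/2$, $T>0$, $F\in\mathrm{L}^2(0,T;\mathbb{L}^2(\Omega))$, $B:\mathbb{L}^2(\Omega)\to\mathbb{L}^2(\Omega)$ Lipschitz with constant $L_B$, $U_0\in\mathbb{W}^{1,p}_0(\Omega)\cap\mathbb{L}^q(\Omega)$, and $\nu>0$. Let $U$ be a solution of $$\frac{dU}{dt}(t)+\partial(\lambda\varphi+\kappa\psi)(U(t))+\alpha I\partial\varphi_\nu(U(t))+B(U(t))=F(t),\ t\in(0,T),\qquad U(0)=U_0.$$ Then there exists a constant $C_1>0$ depending only on $\lambda,\kappa,L_B,T,|B(0)|_{\mathbb{L}^2},|U_0|_{\mathbb{L}^2}$ and $\int_0^T|F|_{\mathbb{L}^2}^2dt$ such that $\sup_{t\in[0,T]}|U(t)|_{\mathbb{L}^2}^2\le C_1$.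
   Context: Functions $U=(u_1,u_2)^{\mathrm T}$ are real $\mathbb{R}^2$-valued; $\mathbb{L}^r(\Omega)=\mathrm{L}^r(\Omega)^2$, $\mathbb{W}^{1,p}_0(\Omega)=\mathrm{W}^{1,p}_0(\Omega)^2$, $(U,V)_{\mathbb{L}^2}=\int_\Omega(u_1v_1+u_2v_2)dx$; $I(u_1,u_2)^{\mathrm T}=(-u_2,u_1)^{\mathrm T}$; $|\nabla U|=(|\nabla u_1|^2+|\nabla u_2|^2)^{1/2}$. On $\mathbb{L}^2(\Omega)$: $\varphi(U)=\frac1p\int_\Omega|\nabla U|^p$ if $U\in\mathbb{W}^{1,p}_0\cap\mathbb{L}^2$, $+\infty$ otherwise; $\psi(U)=\frac1q\int_\Omega|U|^q$ if $U\in\mathbb{L}^q\cap\mathbb{L}^2$, $+\infty$ otherwise; $\partial$ denotes the $\mathbb{L}^2$-subdifferential ($\partial\varphi(U)=-\mathrm{div}(|\nabla U|^{p-2}\nabla U)$, $\partial\psi(U)=|U|^{q-2}U$). The Yosida approximation is $\partial\varphi_\nu(U)=\frac1\nu(U-(1+\nu\partial\varphi)^{-1}U)$. A solution means $U\in\mathrm{W}^{1,2}(0,T;\mathbb{L}^2(\Omega))$ with $U(0)=U_0$, $U(t)\in\mathrm{D}(\partial\varphi)\cap\mathrm{D}(\partial\psi)$ and the equation holding for a.e. $t$, and $\partial\varphi(U),\partial\psi(U)\in\mathrm{L}^2(0,T;\mathbb{L}^2(\Omega))$. *)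

theory Defs
  imports "HOL-Analysis.Analysis"
begin

text \<open>Points of \<open>\<Omega>\<close> live in an arbitrary Euclidean space \<open>'a\<close>
  (so \<open>N = DIM('a)\<close>). An \<open>\<real>\<^sup>2\<close>-valued function \<open>U = (u1,u2)\<close> is encoded as a
  complex-valued function \<open>x \<mapsto> u1 x + i u2 x\<close>; then \<open>|U| = cmod U\<close>, the
  \<open>\<real>\<^sup>2\<close> inner product is \<open>Re (cnj U * V)\<close> and the rotation \<open>I\<close> is multiplication by \<open>\<i>\<close>.
  The gradient of \<open>U\<close> is a pair of vectors (gradient of \<open>u1\<close>, gradient of \<open>u2\<close>);
  the product norm gives \<open>|\<nabla>U| = sqrt (|\<nabla>u1|^2 + |\<nabla>u2|^2)\<close>.\<close>

definition C2_fun :: "('a::euclidean_space \<Rightarrow> real) \<Rightarrow> bool" where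
  "C2_fun g \<longleftrightarrow> (\<exists>g' g''. (\<forall>x. (g has_derivative g' x) (at x))
      \<and> (\<forall>x v. ((\<lambda>y. g' y v) has_derivative g'' x v) (at x))
      \<and> (\<forall>u v. continuous_on UNIV (\<lambda>x. g'' x u v)))"

definition C2_domain :: "'a::euclidean_space set \<Rightarrow> bool" where
  "C2_domain \<Omega> \<longleftrightarrow> open \<Omega> \<and> connected \<Omega> \<and> \<Omega> \<noteq> {} \<and>
     (\<forall>x0\<in>frontier \<Omega>. \<exists>r>0. \<exists>e g. norm e = 1 \<and> C2_fun g \<and>
        \<Omega> \<inter> ball x0 r = {x\<in>ball x0 r. x \<bullet> e > g (x - (x \<bullet> e) *\<^sub>R e)})"

definition Lr :: "real \<Rightarrow> 'a::euclidean_space set \<Rightarrow> ('a \<Rightarrow> complex) \<Rightarrow> bool" where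
  "Lr r \<Omega> f \<longleftrightarrow> f \<in> borel_measurable (lebesgue_on \<Omega>) \<and>
     (\<integral>\<^sup>+x\<in>\<Omega>. ennreal (cmod (f x) powr r) \<partial>lebesgue) < \<infinity>"

abbreviation L2 :: "'a::euclidean_space set \<Rightarrow> ('a \<Rightarrow> complex) \<Rightarrow> bool" where
  "L2 \<Omega> f \<equiv> Lr 2 \<Omega> f"

definition l2norm :: "'a::euclidean_space set \<Rightarrow> ('a \<Rightarrow> complex) \<Rightarrow> real" where
  "l2norm \<Omega> f = sqrt (enn2real (\<integral>\<^sup>+x\<in>\<Omega>. ennreal ((cmod (f x))\<^sup>2) \<partial>lebesgue))"

definition l2inner :: "'a::euclidean_space set \<Rightarrow> ('a \<Rightarrow> complex) \<Rightarrow> ('a \<Rightarrow> complex) \<Rightarrow> real" where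
  "l2inner \<Omega> f g = (\<integral>x\<in>\<Omega>. Re (cnj (f x) * g x) \<partial>lebesgue)"

definition C1c :: "'a::euclidean_space set \<Rightarrow> ('a \<Rightarrow> complex) \<Rightarrow> ('a \<Rightarrow> 'a \<Rightarrow> complex) \<Rightarrow> bool" where
  "C1c \<Omega> f f' \<longleftrightarrow> (\<forall>x. (f has_derivative f' x) (at x)) \<and>
     (\<forall>v. continuous_on UNIV (\<lambda>x. f' x v)) \<and>
     compact (closure {x. f x \<noteq> 0}) \<and> closure {x. f x \<noteq> 0} \<subseteq> \<Omega>"

definition cgrad :: "('a::euclidean_space \<Rightarrow> complex) \<Rightarrow> 'a \<times> 'a" where
  "cgrad D = ((\<Sum>b\<in>Basis. Re (D b) *\<^sub>R b), (\<Sum>b\<in>Basis. Im (D b) *\<^sub>R b))"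

definition W0grad :: "real \<Rightarrow> 'a::euclidean_space set \<Rightarrow> ('a \<Rightarrow> complex) \<Rightarrow> ('a \<Rightarrow> 'a \<times> 'a) \<Rightarrow> bool" where
  "W0grad p \<Omega> U G \<longleftrightarrow> U \<in> borel_measurable (lebesgue_on \<Omega>) \<and> G \<in> borel_measurable (lebesgue_on \<Omega>) \<and>
     (\<exists>\<phi> \<phi>'. (\<forall>k. C1c \<Omega> (\<phi> k) (\<phi>' k)) \<and>
        (\<lambda>k. \<integral>\<^sup>+x\<in>\<Omega>. ennreal (cmod (\<phi> k x - U x) powr p) \<partial>lebesgue) \<longlonglongrightarrow> 0 \<and>
        (\<lambda>k. \<integral>\<^sup>+x\<in>\<Omega>. ennreal (norm (cgrad (\<phi>' k x) - G x) powr p) \<partial>lebesgue) \<longlonglongrightarrow> 0)"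

definition W0 :: "real \<Rightarrow> 'a::euclidean_space set \<Rightarrow> ('a \<Rightarrow> complex) \<Rightarrow> bool" where
  "W0 p \<Omega> U \<longleftrightarrow> (\<exists>G. W0grad p \<Omega> U G)"

definition phi :: "real \<Rightarrow> 'a::euclidean_space set \<Rightarrow> ('a \<Rightarrow> complex) \<Rightarrow> ennreal" where
  "phi p \<Omega> U = (if L2 \<Omega> U \<and> W0 p \<Omega> U
     then (INF G\<in>{G. W0grad p \<Omega> U G}. ennreal (1/p) * (\<integral>\<^sup>+x\<in>\<Omega>. ennreal (norm (G x) powr p) \<partial>lebesgue))
     else \<infinity>)"

definition psi :: "real \<Rightarrow> 'a::euclidean_space set \<Rightarrow> ('a \<Rightarrow> complex) \<Rightarrow> ennreal" where
  "psi q \<Omega> U = (if L2 \<Omega> U \<and> Lr q \<Omega> U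
     then ennreal (1/q) * (\<integral>\<^sup>+x\<in>\<Omega>. ennreal (cmod (U x) powr q) \<partial>lebesgue)
     else \<infinity>)"

definition subdiff :: "'a::euclidean_space set \<Rightarrow> (('a \<Rightarrow> complex) \<Rightarrow> ennreal) \<Rightarrow> ('a \<Rightarrow> complex) \<Rightarrow> ('a \<Rightarrow> complex) set" where
  "subdiff \<Omega> \<Phi> U = {G. L2 \<Omega> U \<and> L2 \<Omega> G \<and> \<Phi> U < \<infinity> \<and>
      (\<forall>W. L2 \<Omega> W \<and> \<Phi> W < \<infinity> \<longrightarrow>
         enn2real (\<Phi> W) - enn2real (\<Phi> U) \<ge> l2inner \<Omega> G (\<lambda>x. W x - U x))}"

text \<open>Values of the Yosida approximation \<open>\<partial>\<Phi>_\<nu>(U) = (U - J_\<nu> U)/\<nu>\<close>, \<open>J_\<nu> = (1+\<nu>\<partial>\<Phi>)\<^sup>-\<^sup>1\<close>: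
  \<open>G = \<partial>\<Phi>_\<nu>(U)\<close> iff \<open>J_\<nu> U = U - \<nu> G\<close> and \<open>G \<in> \<partial>\<Phi>(U - \<nu> G)\<close>
  (unique up to a.e. equality).\<close>
definition yosida :: "'a::euclidean_space set \<Rightarrow> (('a \<Rightarrow> complex) \<Rightarrow> ennreal) \<Rightarrow> real \<Rightarrow> ('a \<Rightarrow> complex) \<Rightarrow> ('a \<Rightarrow> complex) set" where
  "yosida \<Omega> \<Phi> \<nu> U = {G. L2 \<Omega> U \<and> G \<in> subdiff \<Omega> \<Phi> (\<lambda>x. U x - complex_of_real \<nu> * G x)}"

definition L2L2 :: "real \<Rightarrow> 'a::euclidean_space set \<Rightarrow> (real \<Rightarrow> 'a \<Rightarrow> complex) \<Rightarrow> bool" where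
  "L2L2 T \<Omega> F \<longleftrightarrow> (\<lambda>(t,x). F t x) \<in> borel_measurable (lborel \<Otimes>\<^sub>M lborel) \<and>
     (\<integral>\<^sup>+t\<in>{0..T}. (\<integral>\<^sup>+x\<in>\<Omega>. ennreal ((cmod (F t x))\<^sup>2) \<partial>lebesgue) \<partial>lborel) < \<infinity>"

definition L2L2norm_sq :: "real \<Rightarrow> 'a::euclidean_space set \<Rightarrow> (real \<Rightarrow> 'a \<Rightarrow> complex) \<Rightarrow> real" where
  "L2L2norm_sq T \<Omega> F = enn2real (\<integral>\<^sup>+t\<in>{0..T}. (\<integral>\<^sup>+x\<in>\<Omega>. ennreal ((cmod (F t x))\<^sup>2) \<partial>lebesgue) \<partial>lborel)"

text \<open>\<open>U\<close> is a solution of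
  \<open>U' + \<partial>(\<lambda>\<phi>+\<kappa>\<psi>)(U) + \<alpha> I \<partial>\<phi>_\<nu>(U) + B(U) = F\<close> on \<open>(0,T)\<close>, \<open>U(0) = U0\<close>.
  \<open>U \<in> W^{1,2}(0,T;\<L>\<^sup>2)\<close> with \<open>U(0)=U0\<close> is expressed by \<open>U(t) = U0 + \<integral>_0^t V\<close> in \<open>\<L>\<^sup>2\<close>
  for all \<open>t \<in> [0,T]\<close> with \<open>V = dU/dt \<in> L\<^sup>2(0,T;\<L>\<^sup>2)\<close>.\<close>
definition is_solution ::
  "'a::euclidean_space set \<Rightarrow> real \<Rightarrow> real \<Rightarrow> real \<Rightarrow> real \<Rightarrow> real \<Rightarrow> real \<Rightarrow> real \<Rightarrow>
   (('a \<Rightarrow> complex) \<Rightarrow> ('a \<Rightarrow> complex)) \<Rightarrow> (real \<Rightarrow> 'a \<Rightarrow> complex) \<Rightarrow> ('a \<Rightarrow> complex) \<Rightarrow>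
   (real \<Rightarrow> 'a \<Rightarrow> complex) \<Rightarrow> bool" where
  "is_solution \<Omega> p q lam kap \<alpha> \<nu> T B F U0 U \<longleftrightarrow>
     (\<forall>t\<in>{0..T}. L2 \<Omega> (U t)) \<and>
     (\<exists>V. L2L2 T \<Omega> V \<and>
        (\<forall>t\<in>{0..T}. AE x in lebesgue_on \<Omega>.
            set_integrable lborel {0..t} (\<lambda>s. V s x) \<and>
            U t x = U0 x + (\<integral>s\<in>{0..t}. V s x \<partial>lborel)) \<and>
        (AE t in lborel. t \<in> {0<..<T} \<longrightarrow>
           (\<exists>A Y. A \<in> subdiff \<Omega> (\<lambda>W. ennreal lam * phi p \<Omega> W + ennreal kap * psi q \<Omega> W) (U t) \<and>
                  Y \<in> yosida \<Omega> (phi p \<Omega>) \<nu> (U t) \<and>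
                  (AE x in lebesgue_on \<Omega>.
                     V t x + A x + complex_of_real \<alpha> * \<i> * Y x + B (U t) x = F t x)))) \<and>
     (\<exists>P Q. L2L2 T \<Omega> P \<and> L2L2 T \<Omega> Q \<and>
        (AE t in lborel. t \<in> {0<..<T} \<longrightarrow>
           P t \<in> subdiff \<Omega> (phi p \<Omega>) (U t) \<and> Q t \<in> subdiff \<Omega> (psi q \<Omega>) (U t)))"

end

theory Submission
  imports Defs
begin

text \<open>Test the equation with \<open>U\<close>. For \<open>V = dU/dt\<close> the energy identity
  \<open>|U(t)|\<^sup>2 = |U\<^sub>0|\<^sup>2 + 2 \<integral>\<^sub>0\<^sup>t (V, U)\<close> holds, and in
  \<open>(V, U) = (F, U) - (A, U) - \<alpha> (\<i> Y, U) - (B(U), U)\<close>: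
  \<^item> \<open>(A, U) \<ge> 0\<close>, as \<open>A\<close> is a subgradient of \<open>\<lambda>\<phi> + \<kappa>\<psi>\<close>, which is minimal at \<open>0\<close>;
  \<^item> \<open>(\<i> Y, U) = 0\<close>: \<open>\<phi>\<close> is invariant under \<open>U \<mapsto> c U\<close> for \<open>|c| = 1\<close>, which makes the
    Yosida approximation \<open>Y = \<partial>\<phi>\<^sub>\<nu>(U)\<close> orthogonal to \<open>\<i> U\<close>;
  \<^item> Young's inequality and \<open>|B(U) - B(0)| \<le> L\<^sub>B |U|\<close> bound the rest.
  This gives \<open>d|U|\<^sup>2/dt \<le> |F|\<^sup>2 + (3 + L\<^sub>B\<^sup>2) |U|\<^sup>2 + |B(0)|\<^sup>2\<close>, and Gronwall's lemma
  \<open>|U(t)|\<^sup>2 \<le> (|U\<^sub>0|\<^sup>2 + \<integral>\<^sub>0\<^sup>T |F|\<^sup>2 + T |B(0)|\<^sup>2) exp ((3 + L\<^sub>B\<^sup>2) T)\<close>.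
  Neither the regularity of \<open>\<Omega>\<close>, nor \<open>p\<close>, \<open>q\<close>, \<open>\<nu>\<close>, nor \<open>|\<alpha>| \<le> \<lambda>/2\<close> enters this estimate.\<close>

lemma cmod_add_power2: "(cmod (c + w))\<^sup>2 = (cmod c)\<^sup>2 + 2 * Re (cnj w * c) + (cmod w)\<^sup>2"
  unfolding cmod_power2 by (simp add: power2_sum algebra_simps)

lemma Re_cnj_mult_le: "2 * Re (cnj a * b) \<le> (cmod a)\<^sup>2 + (cmod b)\<^sup>2"
proof -
  have "Re (cnj a * b) \<le> cmod a * cmod b"
    using complex_Re_le_cmod[of "cnj a * b"] by (simp add: norm_mult)
  then show ?thesis using sum_squares_bound[of "cmod a" "cmod b"] by simp
qed

lemma abs_Re_cnj_mult_add_le: "\<bar>Re (cnj v * (u + w))\<bar> \<le> (cmod v)\<^sup>2 + (cmod u)\<^sup>2 + (cmod w)\<^sup>2"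
proof -
  have "\<bar>Re (cnj v * (u + w))\<bar> \<le> cmod v * cmod u + cmod v * cmod w"
    using abs_Re_le_cmod[of "cnj v * (u + w)"] norm_triangle_ineq[of u w]
    by (simp add: norm_mult distrib_left[symmetric] mult_left_mono order_trans)
  moreover have "2 * (cmod v * cmod u) \<le> (cmod v)\<^sup>2 + (cmod u)\<^sup>2"
    and "2 * (cmod v * cmod w) \<le> (cmod v)\<^sup>2 + (cmod w)\<^sup>2"
    using sum_squares_bound[of "cmod v"] by (simp_all add: mult.assoc)
  ultimately show ?thesis by (smt (verit) zero_le_power2)
qed

lemma quadratic_nonneg_imp_linear_coeff_eq_0:
  fixes a b :: real
  assumes nonneg: "\<And>t. 0 \<le> t\<^sup>2 * a + t * b"
  shows "b = 0"
proof (rule ccontr)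
  assume b: "b \<noteq> 0"
  define s where "s = 1 / (2 * (\<bar>a\<bar> + 1))"
  have s: "0 < s" "s * a < 1"
    unfolding s_def by (auto simp: field_simps abs_if split: if_splits)
  have "0 \<le> (- b * s)\<^sup>2 * a + (- b * s) * b" by (rule nonneg)
  also have "\<dots> = b\<^sup>2 * s * (s * a - 1)" by (simp add: power2_eq_square algebra_simps)
  also have "\<dots> < 0" using b s by (intro mult_pos_neg) auto
  finally show False by simp
qed

lemma cmod_rational_circle: "cmod (Complex ((1 - t\<^sup>2) / (1 + t\<^sup>2)) (2 * t / (1 + t\<^sup>2))) = 1"
proof -
  have pos: "0 < 1 + t\<^sup>2" by (simp add: add_pos_nonneg)
  have "((1 - t\<^sup>2) / (1 + t\<^sup>2))\<^sup>2 + (2 * t / (1 + t\<^sup>2))\<^sup>2 = ((1 - t\<^sup>2)\<^sup>2 + (2 * t)\<^sup>2) / (1 + t\<^sup>2)\<^sup>2"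
    by (simp add: power_divide add_divide_distrib)
  also have "(1 - t\<^sup>2)\<^sup>2 + (2 * t)\<^sup>2 = (1 + t\<^sup>2)\<^sup>2" by (simp add: power2_eq_square algebra_simps)
  finally show ?thesis using pos by (simp add: cmod_def)
qed

lemma unit_circle_bound_imp_eq_0:
  fixes a b :: real
  assumes rotated: "\<And>c. cmod c = 1 \<Longrightarrow> (Re c - 1) * a - Im c * b \<le> 0"
  shows "b = 0"
proof (rule quadratic_nonneg_imp_linear_coeff_eq_0)
  fix t :: real
  define c where "c = Complex ((1 - t\<^sup>2) / (1 + t\<^sup>2)) (2 * t / (1 + t\<^sup>2))"
  have pos: "0 < 1 + t\<^sup>2" by (simp add: add_pos_nonneg)
  have "Re c - 1 = - 2 * t\<^sup>2 / (1 + t\<^sup>2)" unfolding c_def using pos by (simp add: field_simps)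
  moreover have "Im c = 2 * t / (1 + t\<^sup>2)" unfolding c_def by simp
  ultimately have "(1 + t\<^sup>2) * ((Re c - 1) * a - Im c * b) = - 2 * t\<^sup>2 * a - 2 * t * b"
    using pos by (simp add: right_diff_distrib)
  moreover have "(1 + t\<^sup>2) * ((Re c - 1) * a - Im c * b) \<le> 0"
    using rotated[OF cmod_rational_circle[of t, folded c_def]] pos
    by (intro mult_nonneg_nonpos) auto
  ultimately show "0 \<le> t\<^sup>2 * a + t * b" by linarith
qed

section \<open>The energy identity\<close>

lemma borel_measurable_cnj [measurable (raw)]:
  "f \<in> borel_measurable M \<Longrightarrow> (\<lambda>x. cnj (f x)) \<in> borel_measurable M"
  by (rule borel_measurable_continuous_on[OF continuous_on_cnj[OF continuous_on_id]])

lemma integrable_lborel_pair_mult: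
  fixes f g :: "real \<Rightarrow> 'b::{real_normed_field, banach, second_countable_topology}"
  assumes f: "integrable lborel f" and g: "integrable lborel g"
  shows "integrable (lborel \<Otimes>\<^sub>M lborel) (\<lambda>(s, r). f s * g r)"
proof (rule lborel_pair.Fubini_integrable)
  have [measurable]: "f \<in> borel_measurable lborel" "g \<in> borel_measurable lborel" using f g by auto
  show "(\<lambda>(s, r). f s * g r) \<in> borel_measurable (lborel \<Otimes>\<^sub>M lborel)" by measurable
  have "integrable lborel (\<lambda>s. norm (f s) * (\<integral>r. norm (g r) \<partial>lborel))"
    using f by (intro integrable_mult_left) auto
  then show "integrable lborel (\<lambda>s. \<integral>r. norm (case (s, r) of (s, r) \<Rightarrow> f s * g r) \<partial>lborel)"
    by (simp add: norm_mult)
  show "AE s in lborel. integrable lborel (\<lambda>r. case (s, r) of (s, r) \<Rightarrow> f s * g r)"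
    using g by (auto intro!: integrable_mult_right)
qed

lemma integral_mult_split_diagonal:
  fixes f g :: "real \<Rightarrow> 'b::{real_normed_field, banach, second_countable_topology}"
  assumes f: "integrable lborel f" and g: "integrable lborel g"
  shows "integrable lborel (\<lambda>s. g s * (LBINT r. indicator {..s} r *\<^sub>R f r))"
    and "integrable lborel (\<lambda>r. f r * (LBINT s. indicator {..<r} s *\<^sub>R g s))"
    and "(LBINT s. g s * (LBINT r. indicator {..s} r *\<^sub>R f r))
           + (LBINT r. f r * (LBINT s. indicator {..<r} s *\<^sub>R g s))
         = (LBINT s. g s) * (LBINT r. f r)"
proof -
  define F where "F = (\<lambda>(s, r). g s * f r)"
  have F: "integrable (lborel \<Otimes>\<^sub>M lborel) F"
    unfolding F_def by (rule integrable_lborel_pair_mult[OF g f])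
  have "{p::real \<times> real. p \<in> space (lborel \<Otimes>\<^sub>M lborel) \<and> snd p \<le> fst p} \<in> sets (lborel \<Otimes>\<^sub>M lborel)"
    and "{p::real \<times> real. p \<in> space (lborel \<Otimes>\<^sub>M lborel) \<and> fst p < snd p} \<in> sets (lborel \<Otimes>\<^sub>M lborel)"
    by measurable
  then have lower_set: "{p::real \<times> real. snd p \<le> fst p} \<in> sets (lborel \<Otimes>\<^sub>M lborel)"
    and upper_set: "{p::real \<times> real. fst p < snd p} \<in> sets (lborel \<Otimes>\<^sub>M lborel)"
    by (simp_all add: space_pair_measure)
  define F1 where "F1 = (\<lambda>p. indicator {p::real \<times> real. snd p \<le> fst p} p *\<^sub>R F p)"
  define F2 where "F2 = (\<lambda>p. indicator {p::real \<times> real. fst p < snd p} p *\<^sub>R F p)"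
  have F1: "integrable (lborel \<Otimes>\<^sub>M lborel) F1" and F2: "integrable (lborel \<Otimes>\<^sub>M lborel) F2"
    unfolding F1_def F2_def using lower_set upper_set F by (auto intro: integrable_mult_indicator)
  have F1_sections: "(LBINT r. F1 (s, r)) = g s * (LBINT r. indicator {..s} r *\<^sub>R f r)" for s
    by (subst integral_mult_right_zero[symmetric])
       (auto intro!: Bochner_Integration.integral_cong simp: F1_def F_def split: split_indicator)
  have F2_sections: "(LBINT s. F2 (s, r)) = f r * (LBINT s. indicator {..<r} s *\<^sub>R g s)" for r
    by (subst integral_mult_right_zero[symmetric])
       (auto intro!: Bochner_Integration.integral_cong simp: F2_def F_def split: split_indicator)
  have F2': "integrable (lborel \<Otimes>\<^sub>M lborel) (case_prod (\<lambda>s r. F2 (s, r)))" using F2 by simp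
  show "integrable lborel (\<lambda>s. g s * (LBINT r. indicator {..s} r *\<^sub>R f r))"
    using lborel_pair.integrable_fst'[OF F1] by (simp add: F1_sections)
  show "integrable lborel (\<lambda>r. f r * (LBINT s. indicator {..<r} s *\<^sub>R g s))"
    using lborel_pair.integrable_snd[OF F2'] by (simp add: F2_sections)
  have "(LBINT s. g s) * (LBINT r. f r) = integral\<^sup>L (lborel \<Otimes>\<^sub>M lborel) F"
    unfolding F_def using lborel_pair.integral_fst'[OF F[unfolded F_def]] by simp
  also have "F = (\<lambda>p. F1 p + F2 p)"
    unfolding F1_def F2_def by (auto simp: fun_eq_iff split: split_indicator)
  also have "integral\<^sup>L (lborel \<Otimes>\<^sub>M lborel) (\<lambda>p. F1 p + F2 p)
      = integral\<^sup>L (lborel \<Otimes>\<^sub>M lborel) F1 + integral\<^sup>L (lborel \<Otimes>\<^sub>M lborel) F2"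
    using F1 F2 by simp
  finally show "(LBINT s. g s * (LBINT r. indicator {..s} r *\<^sub>R f r))
           + (LBINT r. f r * (LBINT s. indicator {..<r} s *\<^sub>R g s))
         = (LBINT s. g s) * (LBINT r. f r)"
    using lborel_pair.integral_fst'[OF F1] lborel_pair.integral_snd[OF F2']
    by (simp add: F1_sections F2_sections)
qed

text \<open>The chain rule \<open>d|w|\<^sup>2 = 2 Re (cnj w' w)\<close> in integrated form for an indefinite Lebesgue
  integral \<open>w\<close>: splitting \<open>[0,\<tau>]\<^sup>2\<close> along the diagonal (Fubini) needs no differentiability of \<open>w\<close>.\<close>
lemma cmod_power2_set_integral:
  fixes v :: "real \<Rightarrow> complex"
  assumes v: "set_integrable lborel {0..\<tau>} v"
  defines "w \<equiv> \<lambda>s. LINT r:{0..s}|lborel. v r"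
  shows "set_integrable lborel {0..\<tau>} (\<lambda>s. Re (cnj (v s) * w s))"
    and "(cmod (w \<tau>))\<^sup>2 = 2 * (LINT s:{0..\<tau>}|lborel. Re (cnj (v s) * w s))"
proof -
  define f where "f = (\<lambda>s. indicator {0..\<tau>} s *\<^sub>R v s)"
  have f: "integrable lborel f" using v unfolding f_def set_integrable_def .
  have cnj_f: "integrable lborel (\<lambda>s. cnj (f s))" using f by simp
  have [measurable]: "f \<in> borel_measurable borel" using f by auto
  have lower: "cnj (f s) * (LBINT r. indicator {..s} r *\<^sub>R f r) = cnj (f s) * w s" for s
    unfolding w_def f_def set_lebesgue_integral_def
    by (cases "s \<in> {0..\<tau>}") (auto intro!: arg_cong[where f="(*) _"] Bochner_Integration.integral_cong
        split: split_indicator)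
  have upper: "f r * (LBINT s. indicator {..<r} s *\<^sub>R cnj (f s)) = f r * cnj (w r)" for r
  proof (cases "r \<in> {0..\<tau>}")
    case True
    have "(LBINT s. indicator {..<r} s *\<^sub>R cnj (f s)) = cnj (LBINT s. indicator {..<r} s *\<^sub>R f s)"
      by (simp flip: Bochner_Integration.integral_cnj)
    also have "(LBINT s. indicator {..<r} s *\<^sub>R f s) = (LBINT s. indicator {..r} s *\<^sub>R f s)"
      by (rule integral_cong_AE)
         (auto intro!: eventually_mono[OF AE_lborel_singleton[of r]] split: split_indicator)
    also have "\<dots> = w r"
      using True unfolding w_def f_def set_lebesgue_integral_def
      by (auto intro!: Bochner_Integration.integral_cong split: split_indicator)
    finally show ?thesis by simp
  qed (simp add: f_def)
  note split = integral_mult_split_diagonal[OF f cnj_f, unfolded lower upper]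
  have integrand: "(\<lambda>s. indicator {0..\<tau>} s *\<^sub>R Re (cnj (v s) * w s)) = (\<lambda>s. Re (cnj (f s) * w s))"
    unfolding f_def by (auto split: split_indicator)
  show "set_integrable lborel {0..\<tau>} (\<lambda>s. Re (cnj (v s) * w s))"
    unfolding set_integrable_def integrand using split(1) by (rule integrable_Re)
  have "w \<tau> = (LBINT r. f r)" unfolding w_def f_def set_lebesgue_integral_def ..
  then have "(cmod (w \<tau>))\<^sup>2 = Re ((LBINT s. cnj (f s)) * (LBINT r. f r))"
    unfolding cmod_power2 by (simp add: power2_eq_square)
  also have "\<dots> = Re (LBINT s. cnj (f s) * w s) + Re (LBINT r. f r * cnj (w r))"
    by (simp only: split(3)[symmetric] plus_complex.sel)
  also have "\<dots> = (LBINT s. Re (cnj (f s) * w s)) + (LBINT r. Re (f r * cnj (w r)))"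
    using split(1,2) by (simp only: integral_Re)
  also have "\<dots> = 2 * (LINT s:{0..\<tau>}|lborel. Re (cnj (v s) * w s))"
    unfolding set_lebesgue_integral_def integrand by (simp add: algebra_simps)
  finally show "(cmod (w \<tau>))\<^sup>2 = 2 * (LINT s:{0..\<tau>}|lborel. Re (cnj (v s) * w s))" .
qed

lemma cmod_power2_add_set_integral:
  fixes v :: "real \<Rightarrow> complex" and c :: complex
  assumes v: "set_integrable lborel {0..\<tau>} v"
  defines "w \<equiv> \<lambda>s. LINT r:{0..s}|lborel. v r"
  shows "set_integrable lborel {0..\<tau>} (\<lambda>s. Re (cnj (v s) * (c + w s)))"
    and "(cmod (c + w \<tau>))\<^sup>2 = (cmod c)\<^sup>2 + 2 * (LINT s:{0..\<tau>}|lborel. Re (cnj (v s) * (c + w s)))"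
proof -
  have vw: "set_integrable lborel {0..\<tau>} (\<lambda>s. Re (cnj (v s) * w s))"
    "(cmod (w \<tau>))\<^sup>2 = 2 * (LINT s:{0..\<tau>}|lborel. Re (cnj (v s) * w s))"
    unfolding w_def by (rule cmod_power2_set_integral[OF v])+
  have cnj_v: "integrable lborel (\<lambda>s. cnj (indicator {0..\<tau>} s *\<^sub>R v s))"
    using v unfolding set_integrable_def by (simp only: complex_integrable_cnj)
  have eq: "(\<lambda>s. indicator {0..\<tau>} s *\<^sub>R Re (cnj (v s) * c)) = (\<lambda>s. Re (cnj (indicator {0..\<tau>} s *\<^sub>R v s) * c))"
    by (auto split: split_indicator)
  have vc: "set_integrable lborel {0..\<tau>} (\<lambda>s. Re (cnj (v s) * c))"
    unfolding set_integrable_def eq using cnj_v by (intro integrable_Re integrable_mult_left)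
  have "(LINT s:{0..\<tau>}|lborel. Re (cnj (v s) * c)) = Re ((LBINT s. cnj (indicator {0..\<tau>} s *\<^sub>R v s)) * c)"
    unfolding set_lebesgue_integral_def eq
    by (subst integral_Re[OF integrable_mult_left[OF cnj_v]]) (simp only: integral_mult_left_zero)
  also have "\<dots> = Re (cnj (w \<tau>) * c)"
    unfolding w_def set_lebesgue_integral_def by (simp only: Bochner_Integration.integral_cnj)
  finally have "(LINT s:{0..\<tau>}|lborel. Re (cnj (v s) * c)) = Re (cnj (w \<tau>) * c)" .
  moreover have expand: "(\<lambda>s. Re (cnj (v s) * (c + w s))) = (\<lambda>s. Re (cnj (v s) * c) + Re (cnj (v s) * w s))"
    by (simp add: fun_eq_iff algebra_simps)
  ultimately show "set_integrable lborel {0..\<tau>} (\<lambda>s. Re (cnj (v s) * (c + w s)))"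
    and "(cmod (c + w \<tau>))\<^sup>2 = (cmod c)\<^sup>2 + 2 * (LINT s:{0..\<tau>}|lborel. Re (cnj (v s) * (c + w s)))"
    unfolding expand set_integral_add[OF vc vw(1)] cmod_add_power2 vw(2)
    using vc vw(1) by (auto intro: set_integral_add)
qed

lemma nn_integral_Icc_power2_le:
  fixes f :: "real \<Rightarrow> ennreal"
  assumes [measurable]: "f \<in> borel_measurable lborel" and T: "0 \<le> T"
  shows "(\<integral>\<^sup>+r. f r * indicator {0..T} r \<partial>lborel)\<^sup>2
           \<le> ennreal T * (\<integral>\<^sup>+r. (f r)\<^sup>2 * indicator {0..T} r \<partial>lborel)"
proof -
  have "(\<integral>\<^sup>+r. (f r * indicator {0..T} r) * indicator {0..T} r \<partial>lborel)\<^sup>2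
     \<le> (\<integral>\<^sup>+r. (f r * indicator {0..T} r)\<^sup>2 \<partial>lborel) * (\<integral>\<^sup>+r. (indicator {0..T} r)\<^sup>2 \<partial>lborel)"
    by (rule Cauchy_Schwarz_nn_integral) measurable
  moreover have "(\<lambda>r. (f r * indicator {0..T} r) * indicator {0..T} r) = (\<lambda>r. f r * indicator {0..T} r)"
    and "(\<lambda>r. (f r * indicator {0..T} r)\<^sup>2) = (\<lambda>r. (f r)\<^sup>2 * indicator {0..T} r)"
    and "(\<lambda>r. (indicator {0..T} r :: ennreal)\<^sup>2) = indicator {0..T}"
    by (auto simp: fun_eq_iff split: split_indicator)
  ultimately show ?thesis using T by (simp add: mult.commute)
qed

lemma set_integral_Icc_norm_le:
  fixes v :: "real \<Rightarrow> complex"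
  assumes "s \<le> T"
  shows "ennreal (cmod (LINT r:{0..s}|lborel. v r)) \<le> (\<integral>\<^sup>+r\<in>{0..T}. ennreal (cmod (v r)) \<partial>lborel)"
proof (cases "set_integrable lborel {0..s} v")
  case True
  then have "ennreal (cmod (LINT r:{0..s}|lborel. v r)) \<le> (\<integral>\<^sup>+r. norm (indicator {0..s} r *\<^sub>R v r) \<partial>lborel)"
    unfolding set_integrable_def set_lebesgue_integral_def by (rule integral_norm_bound_ennreal)
  also have "\<dots> \<le> (\<integral>\<^sup>+r\<in>{0..T}. ennreal (cmod (v r)) \<partial>lborel)"
    using assms by (intro nn_integral_mono) (auto split: split_indicator)
  finally show ?thesis .
qed (simp add: set_lebesgue_integral_def set_integrable_def not_integrable_integral_eq)

lemma nn_integral_energy_integrand_le: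
  fixes v :: "real \<Rightarrow> complex"
  assumes [measurable]: "v \<in> borel_measurable lborel" and \<tau>: "0 \<le> \<tau>" "\<tau> \<le> T"
  defines "N \<equiv> \<integral>\<^sup>+r\<in>{0..T}. ennreal ((cmod (v r))\<^sup>2) \<partial>lborel"
  shows "(\<integral>\<^sup>+s. ennreal \<bar>indicator {0..\<tau>} s * Re (cnj (v s) * (c + (LINT r:{0..s}|lborel. v r)))\<bar> \<partial>lborel)
           \<le> N + ennreal ((cmod c)\<^sup>2) * ennreal T + ennreal T * N * ennreal T"
proof -
  define Wn where "Wn = (\<integral>\<^sup>+r\<in>{0..T}. ennreal (cmod (v r)) \<partial>lborel)"
  have "ennreal \<bar>indicator {0..\<tau>} s * Re (cnj (v s) * (c + (LINT r:{0..s}|lborel. v r)))\<bar>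
      \<le> ennreal ((cmod (v s))\<^sup>2) * indicator {0..T} s + (ennreal ((cmod c)\<^sup>2) + Wn\<^sup>2) * indicator {0..T} s" for s
  proof (cases "s \<in> {0..\<tau>}")
    case True
    have "ennreal ((cmod (LINT r:{0..s}|lborel. v r))\<^sup>2) = (ennreal (cmod (LINT r:{0..s}|lborel. v r)))\<^sup>2"
      by (simp add: ennreal_power)
    also have "\<dots> \<le> Wn\<^sup>2"
      unfolding Wn_def using True \<tau> by (intro power_mono set_integral_Icc_norm_le) auto
    finally have W: "ennreal ((cmod (LINT r:{0..s}|lborel. v r))\<^sup>2) \<le> Wn\<^sup>2" .
    have "ennreal \<bar>Re (cnj (v s) * (c + (LINT r:{0..s}|lborel. v r)))\<bar>
        \<le> ennreal ((cmod (v s))\<^sup>2 + (cmod c)\<^sup>2 + (cmod (LINT r:{0..s}|lborel. v r))\<^sup>2)"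
      by (rule ennreal_leI[OF abs_Re_cnj_mult_add_le])
    also have "\<dots> \<le> ennreal ((cmod (v s))\<^sup>2) + ennreal ((cmod c)\<^sup>2) + Wn\<^sup>2"
      using W by (simp add: ennreal_plus add_left_mono)
    finally show ?thesis using True \<tau> by (simp add: distrib_right add.assoc)
  qed simp
  then have "(\<integral>\<^sup>+s. ennreal \<bar>indicator {0..\<tau>} s * Re (cnj (v s) * (c + (LINT r:{0..s}|lborel. v r)))\<bar> \<partial>lborel)
      \<le> (\<integral>\<^sup>+s. ennreal ((cmod (v s))\<^sup>2) * indicator {0..T} s
            + (ennreal ((cmod c)\<^sup>2) + Wn\<^sup>2) * indicator {0..T} s \<partial>lborel)"
    by (rule nn_integral_mono)
  also have "\<dots> = N + (ennreal ((cmod c)\<^sup>2) + Wn\<^sup>2) * ennreal T"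
    unfolding N_def using \<tau> by (subst nn_integral_add) (auto simp: nn_integral_cmult_indicator)
  also have "\<dots> \<le> N + ennreal ((cmod c)\<^sup>2) * ennreal T + ennreal T * N * ennreal T"
  proof -
    have "Wn\<^sup>2 \<le> ennreal T * N"
      using nn_integral_Icc_power2_le[of "\<lambda>r. ennreal (cmod (v r))" T] \<tau>
      unfolding Wn_def N_def by (simp add: ennreal_power mult.commute)
    then show ?thesis by (simp add: distrib_right add.assoc mult_right_mono)
  qed
  finally show ?thesis .
qed

lemma energy_integrand_integrable:
  fixes V :: "real \<Rightarrow> 'b \<Rightarrow> complex" and U0 :: "'b \<Rightarrow> complex"
  assumes "sigma_finite_measure M"
    and V[measurable]: "(\<lambda>(t, x). V t x) \<in> borel_measurable (lborel \<Otimes>\<^sub>M M)"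
    and V_L2: "(\<integral>\<^sup>+t\<in>{0..T}. (\<integral>\<^sup>+x. ennreal ((cmod (V t x))\<^sup>2) \<partial>M) \<partial>lborel) < \<infinity>"
    and U0[measurable]: "U0 \<in> borel_measurable M"
    and U0_L2: "(\<integral>\<^sup>+x. ennreal ((cmod (U0 x))\<^sup>2) \<partial>M) < \<infinity>"
    and \<tau>: "0 \<le> \<tau>" "\<tau> \<le> T"
  shows "integrable (lborel \<Otimes>\<^sub>M M) (\<lambda>(s, x). indicator {0..\<tau>} s
            * Re (cnj (V s x) * (U0 x + (LINT r:{0..s}|lborel. V r x))))" (is "integrable _ ?Q")
proof -
  interpret M: sigma_finite_measure M by fact
  interpret P: pair_sigma_finite lborel M ..
  define W where "W = (\<lambda>s x. \<integral>r. (if 0 \<le> r \<and> r \<le> s then V r x else 0) \<partial>lborel)"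
  have "(LINT r:{0..s}|lborel. V r x) = W s x" for s x
    unfolding W_def set_lebesgue_integral_def
    by (rule Bochner_Integration.integral_cong) (auto split: split_indicator)
  moreover have [measurable]: "(\<lambda>(s, x). W s x) \<in> borel_measurable (lborel \<Otimes>\<^sub>M M)"
    unfolding W_def by measurable
  then have "(\<lambda>(s, x). indicator {0..\<tau>} s * Re (cnj (V s x) * (U0 x + W s x)))
      \<in> borel_measurable (lborel \<Otimes>\<^sub>M M)"
    by measurable
  ultimately have Q_measurable[measurable]: "?Q \<in> borel_measurable (lborel \<Otimes>\<^sub>M M)" by simp
  define N where "N = (\<lambda>x. \<integral>\<^sup>+r\<in>{0..T}. ennreal ((cmod (V r x))\<^sup>2) \<partial>lborel)"
  have [measurable]: "N \<in> borel_measurable M" unfolding N_def by measurable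
  have "(\<integral>\<^sup>+x. N x \<partial>M) = (\<integral>\<^sup>+t\<in>{0..T}. (\<integral>\<^sup>+x. ennreal ((cmod (V t x))\<^sup>2) \<partial>M) \<partial>lborel)"
    unfolding N_def
    using P.Fubini[of "\<lambda>(r, x). ennreal ((cmod (V r x))\<^sup>2) * indicator {0..T} r"]
    by (simp add: nn_integral_multc)
  then have N_finite: "(\<integral>\<^sup>+x. N x \<partial>M) < \<infinity>" using V_L2 by simp
  have "(\<integral>\<^sup>+p. ennreal (norm (?Q p)) \<partial>(lborel \<Otimes>\<^sub>M M)) = (\<integral>\<^sup>+x. (\<integral>\<^sup>+s. ennreal (norm (?Q (s, x))) \<partial>lborel) \<partial>M)"
    by (rule P.nn_integral_snd[symmetric]) measurable
  also have "\<dots> \<le> (\<integral>\<^sup>+x. N x + ennreal ((cmod (U0 x))\<^sup>2) * ennreal T + ennreal T * N x * ennreal T \<partial>M)"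
  proof (rule nn_integral_mono)
    fix x assume "x \<in> space M"
    from measurable_Pair1[OF V this] have "(\<lambda>r. V r x) \<in> borel_measurable lborel" by simp
    from nn_integral_energy_integrand_le[OF this \<tau>, of "U0 x"]
    show "(\<integral>\<^sup>+s. ennreal (norm (?Q (s, x))) \<partial>lborel)
        \<le> N x + ennreal ((cmod (U0 x))\<^sup>2) * ennreal T + ennreal T * N x * ennreal T"
      unfolding N_def by simp
  qed
  also have "\<dots> = (\<integral>\<^sup>+x. N x \<partial>M) + (\<integral>\<^sup>+x. ennreal ((cmod (U0 x))\<^sup>2) \<partial>M) * ennreal T
      + ennreal T * (\<integral>\<^sup>+x. N x \<partial>M) * ennreal T"
    by (simp add: nn_integral_add nn_integral_multc nn_integral_cmult)
  also have "\<dots> < \<infinity>"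
    using N_finite U0_L2 by (simp add: less_top[symmetric] ennreal_mult_eq_top_iff)
  finally show ?thesis by (rule integrableI_bounded[OF Q_measurable])
qed

lemma energy_identity:
  fixes V U :: "real \<Rightarrow> 'b \<Rightarrow> complex" and U0 :: "'b \<Rightarrow> complex"
  assumes M: "sigma_finite_measure M"
    and V[measurable]: "(\<lambda>(t, x). V t x) \<in> borel_measurable (lborel \<Otimes>\<^sub>M M)"
    and V_L2: "(\<integral>\<^sup>+t\<in>{0..T}. (\<integral>\<^sup>+x. ennreal ((cmod (V t x))\<^sup>2) \<partial>M) \<partial>lborel) < \<infinity>"
    and U0[measurable]: "U0 \<in> borel_measurable M"
    and U0_L2: "(\<integral>\<^sup>+x. ennreal ((cmod (U0 x))\<^sup>2) \<partial>M) < \<infinity>"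
    and U: "\<And>t. t \<in> {0..T} \<Longrightarrow> AE x in M. set_integrable lborel {0..t} (\<lambda>s. V s x)
              \<and> U t x = U0 x + (LINT s:{0..t}|lborel. V s x)"
    and U_measurable: "\<And>t. t \<in> {0..T} \<Longrightarrow> U t \<in> borel_measurable M"
    and \<tau>: "\<tau> \<in> {0..T}"
  shows "set_integrable lborel {0..\<tau>} (\<lambda>s. \<integral>x. Re (cnj (V s x) * U s x) \<partial>M)"
    and "(\<integral>x. (cmod (U \<tau> x))\<^sup>2 \<partial>M)
           = (\<integral>x. (cmod (U0 x))\<^sup>2 \<partial>M) + 2 * (LINT s:{0..\<tau>}|lborel. \<integral>x. Re (cnj (V s x) * U s x) \<partial>M)"
proof -
  interpret M: sigma_finite_measure M by fact
  interpret P: pair_sigma_finite lborel M ..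
  define Q where "Q = (\<lambda>s x. indicator {0..\<tau>} s * Re (cnj (V s x) * (U0 x + (LINT r:{0..s}|lborel. V r x))))"
  have Q: "integrable (lborel \<Otimes>\<^sub>M M) (\<lambda>(s, x). Q s x)"
    unfolding Q_def using energy_integrand_integrable[OF M V V_L2 U0 U0_L2] \<tau> by auto
  then have Q_measurable: "(\<lambda>(s, x). Q s x) \<in> borel_measurable (lborel \<Otimes>\<^sub>M M)" by auto
  have U0_integrable: "integrable M (\<lambda>x. (cmod (U0 x))\<^sup>2)"
    using U0_L2 by (intro integrableI_bounded) auto
  have pointwise: "AE x in M. (cmod (U \<tau> x))\<^sup>2 = (cmod (U0 x))\<^sup>2 + 2 * (\<integral>s. Q s x \<partial>lborel)"
    using U[OF \<tau>]
  proof eventually_elim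
    case (elim x)
    then show ?case
      using cmod_power2_add_set_integral(2)[of \<tau> "\<lambda>s. V s x" "U0 x"]
      by (simp add: Q_def set_lebesgue_integral_def)
  qed
  have sections: "(\<integral>x. Q s x \<partial>M) = indicator {0..\<tau>} s * (\<integral>x. Re (cnj (V s x) * U s x) \<partial>M)" for s
  proof (cases "s \<in> {0..\<tau>}")
    case True
    have [measurable]: "U s \<in> borel_measurable M" "(\<lambda>x. Q s x) \<in> borel_measurable M"
      using True \<tau> U_measurable measurable_Pair2[OF Q_measurable] by auto
    have "AE x in M. Q s x = Re (cnj (V s x) * U s x)"
      using U[of s] True \<tau> by (auto simp: Q_def elim: AE_mp)
    then show ?thesis using True by (simp add: integral_cong_AE)
  qed (simp add: Q_def)
  show "set_integrable lborel {0..\<tau>} (\<lambda>s. \<integral>x. Re (cnj (V s x) * U s x) \<partial>M)"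
    using P.integrable_fst[OF Q] by (simp add: set_integrable_def sections)
  have "(\<integral>x. (cmod (U \<tau> x))\<^sup>2 \<partial>M) = (\<integral>x. (cmod (U0 x))\<^sup>2 + 2 * (\<integral>s. Q s x \<partial>lborel) \<partial>M)"
    using pointwise U_measurable[OF \<tau>] P.integrable_snd[OF Q] U0_integrable
    by (intro integral_cong_AE) auto
  also have "\<dots> = (\<integral>x. (cmod (U0 x))\<^sup>2 \<partial>M) + 2 * (\<integral>x. (\<integral>s. Q s x \<partial>lborel) \<partial>M)"
    using U0_integrable P.integrable_snd[OF Q] by simp
  also have "(\<integral>x. (\<integral>s. Q s x \<partial>lborel) \<partial>M) = (\<integral>s. (\<integral>x. Q s x \<partial>M) \<partial>lborel)"
    using P.Fubini_integral[OF Q] by simp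
  finally show "(\<integral>x. (cmod (U \<tau> x))\<^sup>2 \<partial>M)
      = (\<integral>x. (cmod (U0 x))\<^sup>2 \<partial>M) + 2 * (LINT s:{0..\<tau>}|lborel. \<integral>x. Re (cnj (V s x) * U s x) \<partial>M)"
    by (simp add: set_lebesgue_integral_def sections)
qed

section \<open>A Gronwall argument\<close>

lemma integral_real_le_nn_integral:
  fixes f :: "'b \<Rightarrow> real"
  assumes "integrable M f"
  shows "ennreal (integral\<^sup>L M f) \<le> (\<integral>\<^sup>+x. ennreal (f x) \<partial>M)"
proof -
  have "integral\<^sup>L M f \<le> integral\<^sup>L M (\<lambda>x. max (f x) 0)"
    using assms by (intro integral_mono) auto
  moreover have "ennreal (integral\<^sup>L M (\<lambda>x. max (f x) 0)) = (\<integral>\<^sup>+x. ennreal (max (f x) 0) \<partial>M)"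
    using assms by (intro nn_integral_eq_integral[symmetric]) auto
  moreover have "(\<integral>\<^sup>+x. ennreal (max (f x) 0) \<partial>M) = (\<integral>\<^sup>+x. ennreal (f x) \<partial>M)"
    by (intro nn_integral_cong) (simp add: max_def ennreal_neg)
  ultimately show ?thesis by (metis ennreal_leI)
qed

lemma set_integral_real_le_set_nn_integral:
  fixes h :: "'b \<Rightarrow> real"
  assumes "set_integrable M S h" and "AE x in M. x \<in> S \<longrightarrow> ennreal (h x) \<le> G x"
  shows "ennreal (LINT x:S|M. h x) \<le> (\<integral>\<^sup>+x\<in>S. G x \<partial>M)"
proof -
  have "ennreal (LINT x:S|M. h x) \<le> (\<integral>\<^sup>+x. ennreal (indicator S x * h x) \<partial>M)"
    using integral_real_le_nn_integral[OF assms(1)[unfolded set_integrable_def]]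
    by (simp add: set_lebesgue_integral_def)
  also have "\<dots> \<le> (\<integral>\<^sup>+x\<in>S. G x \<partial>M)"
    using assms(2) by (intro nn_integral_mono_AE) (auto split: split_indicator)
  finally show ?thesis .
qed

lemma set_integral_Icc_le_nn_integral_add_integral:
  fixes h f :: "real \<Rightarrow> real" and N :: "real \<Rightarrow> ennreal"
  assumes h: "set_integrable lborel {0..\<tau>} h"
    and f: "continuous_on {0..\<tau>} f" "\<And>s. s \<in> {0..\<tau>} \<Longrightarrow> 0 \<le> f s"
    and N: "N \<in> borel_measurable lborel"
    and bound: "AE s in lborel. s \<in> {0..\<tau>} \<longrightarrow> ennreal (h s) \<le> N s + ennreal (f s)"
  shows "ennreal (LINT s:{0..\<tau>}|lborel. h s) \<le> (\<integral>\<^sup>+s\<in>{0..\<tau>}. N s \<partial>lborel) + ennreal (integral {0..\<tau>} f)"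
proof -
  have "(\<lambda>s. indicator {0..\<tau>} s *\<^sub>R f s) \<in> borel_measurable borel"
    by (rule borel_measurable_continuous_on_indicator[OF _ f(1)]) simp
  then have [measurable]: "(\<lambda>s. ennreal (f s) * indicator {0..\<tau>} s) \<in> borel_measurable lborel"
    by (subst measurable_cong[where g="\<lambda>s. ennreal (indicator {0..\<tau>} s *\<^sub>R f s)"])
       (auto split: split_indicator)
  have "ennreal (LINT s:{0..\<tau>}|lborel. h s) \<le> (\<integral>\<^sup>+s\<in>{0..\<tau>}. N s + ennreal (f s) \<partial>lborel)"
    by (rule set_integral_real_le_set_nn_integral[OF h bound])
  also have "\<dots> = (\<integral>\<^sup>+s\<in>{0..\<tau>}. N s \<partial>lborel) + (\<integral>\<^sup>+s\<in>{0..\<tau>}. ennreal (f s) \<partial>lborel)"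
    using N by (simp add: distrib_right nn_integral_add)
  also have "(\<integral>\<^sup>+s\<in>{0..\<tau>}. ennreal (f s) \<partial>lborel) = ennreal (integral {0..\<tau>} f)"
    using f by (intro nn_integral_has_integral_lebesgue') (auto intro: integrable_continuous_interval)
  finally show ?thesis .
qed

lemma gronwall_integral:
  fixes g :: "real \<Rightarrow> real" and K k T t :: real
  assumes cont: "continuous_on {0..T} g" and k: "0 \<le> k"
    and bnd: "\<And>t. t \<in> {0..T} \<Longrightarrow> g t \<le> K + k * integral {0..t} g"
    and t: "t \<in> {0..T}"
  shows "g t \<le> K * exp (k * t)"
proof -
  define I where "I u = integral {0..u} g" for u
  define \<Phi> where "\<Phi> u = exp (- k * u) * (K + k * I u)" for u
  have dI: "(I has_real_derivative g x) (at x within {0..T})" if "x \<in> {0..T}" for x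
    using integral_has_real_derivative[OF cont that] unfolding I_def .
  have d\<Phi>: "(\<Phi> has_real_derivative (exp (- k * x) * (k * (g x - (K + k * I x))))) (at x within {0..T})"
    if "x \<in> {0..T}" for x
    unfolding \<Phi>_def
    by (rule derivative_eq_intros dI[OF that] refl | simp)+ (simp add: algebra_simps)
  have "\<Phi> t - \<Phi> 0 \<le> 0"
  proof -
    have "\<exists>x\<in>{0..t}. \<Phi> t - \<Phi> 0 = (*) (exp (- k * x) * (k * (g x - (K + k * I x)))) (t - 0)"
    proof (rule mvt_very_simple)
      show "0 \<le> t" using t by simp
      fix x assume "0 \<le> x" "x \<le> t"
      then have "x \<in> {0..T}" using t by auto
      from DERIV_subset[OF d\<Phi>[OF this], of "{0..t}"] t
      show "(\<Phi> has_derivative (*) (exp (- k * x) * (k * (g x - (K + k * I x))))) (at x within {0..t})"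
        by (simp add: has_field_derivative_def)
    qed
    then obtain x where x: "x \<in> {0..t}" and e: "\<Phi> t - \<Phi> 0 = (exp (- k * x) * (k * (g x - (K + k * I x)))) * t"
      by auto
    have "x \<in> {0..T}" using x t by auto
    then have "g x - (K + k * I x) \<le> 0" using bnd unfolding I_def by auto
    then have "k * (g x - (K + k * I x)) \<le> 0" using k by (simp add: mult_nonneg_nonpos)
    then have "exp (- k * x) * (k * (g x - (K + k * I x))) \<le> 0" by (simp add: mult_nonneg_nonpos)
    then show ?thesis unfolding e using x by (simp add: mult_nonpos_nonneg)
  qed
  moreover have "\<Phi> 0 = K" unfolding \<Phi>_def I_def by simp
  ultimately have "\<Phi> t \<le> K" by simp
  then have "exp (- k * t) * (K + k * I t) \<le> K" unfolding \<Phi>_def .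
  then have "K + k * I t \<le> K * exp (k * t)"
    by (simp add: exp_minus field_simps)
  then show ?thesis using bnd[OF t] unfolding I_def by simp
qed

lemma gronwall_integrated_energy_inequality:
  fixes g h :: "real \<Rightarrow> real" and N :: "real \<Rightarrow> ennreal"
  assumes identity: "\<And>\<tau>. \<tau> \<in> {0..T} \<Longrightarrow>
        set_integrable lborel {0..\<tau>} h \<and> g \<tau> = g0 + (LINT s:{0..\<tau>}|lborel. h s)"
    and rate: "AE s in lborel. s \<in> {0<..<T} \<longrightarrow> ennreal (h s) \<le> N s + ennreal (k * g s + c)"
    and N: "N \<in> borel_measurable lborel" and N_bound: "(\<integral>\<^sup>+s\<in>{0..T}. N s \<partial>lborel) \<le> ennreal M"
    and g0: "0 \<le> g0" and M: "0 \<le> M" and k: "0 \<le> k" and c: "0 \<le> c" and g_nonneg: "\<And>s. 0 \<le> g s"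
    and t: "t \<in> {0..T}"
  shows "g t \<le> (g0 + M + c * T) * exp (k * T)"
proof -
  have "h integrable_on {0..T}"
    using identity[of T] t by (simp add: set_borel_integral_eq_integral)
  then have "continuous_on {0..T} (\<lambda>\<tau>. g0 + integral {0..\<tau>} h)"
    by (intro continuous_intros indefinite_integral_continuous_1)
  then have g_continuous: "continuous_on {0..T} g"
    by (rule continuous_on_eq) (simp add: identity set_borel_integral_eq_integral)
  have "g \<tau> \<le> (g0 + M + c * T) + k * integral {0..\<tau>} g" if \<tau>: "\<tau> \<in> {0..T}" for \<tau>
  proof -
    have g_continuous_\<tau>: "continuous_on {0..\<tau>} g"
      using \<tau> by (auto intro: continuous_on_subset[OF g_continuous])
    have "ennreal (LINT s:{0..\<tau>}|lborel. h s)
        \<le> (\<integral>\<^sup>+s\<in>{0..\<tau>}. N s \<partial>lborel) + ennreal (integral {0..\<tau>} (\<lambda>s. k * g s + c))"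
    proof (rule set_integral_Icc_le_nn_integral_add_integral[OF _ _ _ N])
      show "AE s in lborel. s \<in> {0..\<tau>} \<longrightarrow> ennreal (h s) \<le> N s + ennreal (k * g s + c)"
        using rate AE_lborel_singleton[of 0] AE_lborel_singleton[of T]
        by eventually_elim (use \<tau> in auto)
    qed (use identity[OF \<tau>] g_continuous_\<tau> k c g_nonneg in \<open>auto intro!: continuous_intros\<close>)
    also have "(\<integral>\<^sup>+s\<in>{0..\<tau>}. N s \<partial>lborel) \<le> ennreal M"
      using \<tau> by (intro order_trans[OF nn_integral_mono N_bound]) (auto split: split_indicator)
    also have "integral {0..\<tau>} (\<lambda>s. k * g s + c) = k * integral {0..\<tau>} g + c * \<tau>"
      using \<tau> g_continuous_\<tau> by (subst Henstock_Kurzweil_Integration.integral_add)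
        (auto intro!: integrable_continuous_interval continuous_intros)
    finally have "ennreal (LINT s:{0..\<tau>}|lborel. h s) \<le> ennreal M + ennreal (k * integral {0..\<tau>} g + c * \<tau>)"
      by (simp add: add_right_mono)
    moreover have "0 \<le> integral {0..\<tau>} g"
      using g_nonneg g_continuous_\<tau> by (intro integral_nonneg integrable_continuous_interval)
    then have "0 \<le> k * integral {0..\<tau>} g + c * \<tau>" using k c \<tau> by simp
    ultimately have "(LINT s:{0..\<tau>}|lborel. h s) \<le> M + (k * integral {0..\<tau>} g + c * \<tau>)"
      using M by (simp add: ennreal_plus[symmetric] del: ennreal_plus)
    moreover have "c * \<tau> \<le> c * T" using c \<tau> by (intro mult_left_mono) auto
    ultimately show ?thesis using identity[OF \<tau>] by simp
  qed
  then have "g t \<le> (g0 + M + c * T) * exp (k * t)"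
    by (intro gronwall_integral[OF g_continuous k _ t])
  also have "\<dots> \<le> (g0 + M + c * T) * exp (k * T)"
    using g0 t M k c by (intro mult_left_mono) (auto intro: mult_left_mono)
  finally show ?thesis .
qed

lemma Lr_zero: "Lr r \<Omega> (\<lambda>x. 0)"
  unfolding Lr_def by simp

lemma L2_iff:
  assumes "\<Omega> \<in> sets lebesgue"
  shows "L2 \<Omega> f \<longleftrightarrow> f \<in> borel_measurable (lebesgue_on \<Omega>)
           \<and> (\<integral>\<^sup>+x. ennreal ((cmod (f x))\<^sup>2) \<partial>lebesgue_on \<Omega>) < \<infinity>"
  unfolding Lr_def using assms by (simp add: nn_integral_restrict_space powr_numeral)

lemma L2_imp_integrable_power2:
  assumes "\<Omega> \<in> sets lebesgue" "L2 \<Omega> f"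
  shows "integrable (lebesgue_on \<Omega>) (\<lambda>x. (cmod (f x))\<^sup>2)"
  using assms by (intro integrableI_bounded) (auto simp: L2_iff)

lemma L2_diff:
  assumes \<Omega>: "\<Omega> \<in> sets lebesgue" and f: "L2 \<Omega> f" and g: "L2 \<Omega> g"
  shows "L2 \<Omega> (\<lambda>x. f x - g x)"
proof -
  have [measurable]: "f \<in> borel_measurable (lebesgue_on \<Omega>)" "g \<in> borel_measurable (lebesgue_on \<Omega>)"
    using f g \<Omega> by (auto simp: L2_iff)
  have "(\<integral>\<^sup>+x. ennreal ((cmod (f x - g x))\<^sup>2) \<partial>lebesgue_on \<Omega>)
     \<le> (\<integral>\<^sup>+x. 2 * ennreal ((cmod (f x))\<^sup>2) + 2 * ennreal ((cmod (g x))\<^sup>2) \<partial>lebesgue_on \<Omega>)"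
  proof (rule nn_integral_mono)
    fix x
    have "(cmod (f x - g x))\<^sup>2 \<le> (cmod (f x) + cmod (g x))\<^sup>2"
      by (intro power_mono norm_triangle_ineq4) simp
    also have "\<dots> \<le> 2 * (cmod (f x))\<^sup>2 + 2 * (cmod (g x))\<^sup>2"
      using sum_squares_bound[of "cmod (f x)" "cmod (g x)"] by (simp add: power2_sum)
    finally have "ennreal ((cmod (f x - g x))\<^sup>2) \<le> ennreal (2 * (cmod (f x))\<^sup>2 + 2 * (cmod (g x))\<^sup>2)"
      by (rule ennreal_leI)
    then show "ennreal ((cmod (f x - g x))\<^sup>2) \<le> 2 * ennreal ((cmod (f x))\<^sup>2) + 2 * ennreal ((cmod (g x))\<^sup>2)"
      by (simp add: ennreal_plus ennreal_mult)
  qed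
  also have "\<dots> = 2 * (\<integral>\<^sup>+x. ennreal ((cmod (f x))\<^sup>2) \<partial>lebesgue_on \<Omega>)
      + 2 * (\<integral>\<^sup>+x. ennreal ((cmod (g x))\<^sup>2) \<partial>lebesgue_on \<Omega>)"
    by (simp add: nn_integral_add nn_integral_cmult)
  also have "\<dots> < \<infinity>" using f g \<Omega> by (simp add: L2_iff ennreal_mult_less_top)
  finally show ?thesis using \<Omega> by (simp add: L2_iff)
qed

lemma L2_cnj_mult_integrable:
  assumes \<Omega>: "\<Omega> \<in> sets lebesgue" and f: "L2 \<Omega> f" and g: "L2 \<Omega> g"
  shows "integrable (lebesgue_on \<Omega>) (\<lambda>x. cnj (f x) * g x)"
proof (rule Bochner_Integration.integrable_bound)
  show "integrable (lebesgue_on \<Omega>) (\<lambda>x. (cmod (f x))\<^sup>2 + (cmod (g x))\<^sup>2)"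
    using L2_imp_integrable_power2[OF \<Omega> f] L2_imp_integrable_power2[OF \<Omega> g] by simp
  have [measurable]: "f \<in> borel_measurable (lebesgue_on \<Omega>)" "g \<in> borel_measurable (lebesgue_on \<Omega>)"
    using f g \<Omega> by (auto simp: L2_iff)
  show "(\<lambda>x. cnj (f x) * g x) \<in> borel_measurable (lebesgue_on \<Omega>)" by measurable
  show "AE x in lebesgue_on \<Omega>. norm (cnj (f x) * g x) \<le> norm ((cmod (f x))\<^sup>2 + (cmod (g x))\<^sup>2)"
  proof (rule AE_I2)
    fix x
    have "2 * (cmod (f x) * cmod (g x)) \<le> (cmod (f x))\<^sup>2 + (cmod (g x))\<^sup>2"
      using sum_squares_bound[of "cmod (f x)" "cmod (g x)"] by (simp add: mult.assoc)
    then show "norm (cnj (f x) * g x) \<le> norm ((cmod (f x))\<^sup>2 + (cmod (g x))\<^sup>2)"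
      by (simp add: norm_mult) (smt (verit) mult_nonneg_nonneg norm_ge_zero)
  qed
qed

lemma l2inner_eq_integral:
  assumes "\<Omega> \<in> sets lebesgue"
  shows "l2inner \<Omega> f g = (\<integral>x. Re (cnj (f x) * g x) \<partial>lebesgue_on \<Omega>)"
  unfolding l2inner_def set_lebesgue_integral_def using assms by (simp add: integral_restrict_space)

lemma l2norm_power2:
  assumes \<Omega>: "\<Omega> \<in> sets lebesgue" and f: "L2 \<Omega> f"
  shows "(l2norm \<Omega> f)\<^sup>2 = (\<integral>x. (cmod (f x))\<^sup>2 \<partial>lebesgue_on \<Omega>)"
    and "(\<integral>\<^sup>+x. ennreal ((cmod (f x))\<^sup>2) \<partial>lebesgue_on \<Omega>) = ennreal ((l2norm \<Omega> f)\<^sup>2)"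
proof -
  have "(\<integral>\<^sup>+x. ennreal ((cmod (f x))\<^sup>2) \<partial>lebesgue_on \<Omega>) = ennreal (\<integral>x. (cmod (f x))\<^sup>2 \<partial>lebesgue_on \<Omega>)"
    by (rule nn_integral_eq_integral[OF L2_imp_integrable_power2[OF \<Omega> f]]) simp
  moreover have "(\<integral>\<^sup>+x\<in>\<Omega>. ennreal ((cmod (f x))\<^sup>2) \<partial>lebesgue)
      = (\<integral>\<^sup>+x. ennreal ((cmod (f x))\<^sup>2) \<partial>lebesgue_on \<Omega>)"
    using \<Omega> by (simp add: nn_integral_restrict_space)
  ultimately show "(l2norm \<Omega> f)\<^sup>2 = (\<integral>x. (cmod (f x))\<^sup>2 \<partial>lebesgue_on \<Omega>)"
    unfolding l2norm_def by (simp add: integral_nonneg_AE)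
  then show "(\<integral>\<^sup>+x. ennreal ((cmod (f x))\<^sup>2) \<partial>lebesgue_on \<Omega>) = ennreal ((l2norm \<Omega> f)\<^sup>2)"
    using \<open>(\<integral>\<^sup>+x. _ \<partial>lebesgue_on \<Omega>) = _\<close> by simp
qed

lemma sigma_finite_lebesgue_on:
  assumes "\<Omega> \<in> sets lebesgue"
  shows "sigma_finite_measure (lebesgue_on \<Omega>)"
proof (rule sigma_finite_measure_restrict_space[OF _ assms])
  obtain C :: "'a set set" where "countable C" "C \<subseteq> sets lborel" "\<Union>C = UNIV"
      "\<forall>a\<in>C. emeasure lborel a \<noteq> \<infinity>"
    using lborel.sigma_finite_countable by auto
  then show "sigma_finite_measure (lebesgue :: 'a measure)"
    by unfold_locales (auto intro!: exI[of _ C])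
qed

lemma L2L2_section_measurable:
  assumes "L2L2 T \<Omega> F"
  shows "F t \<in> borel_measurable (lebesgue_on \<Omega>)"
proof -
  have "(\<lambda>(t, x). F t x) \<in> borel_measurable (lborel \<Otimes>\<^sub>M lborel)" using assms unfolding L2L2_def by simp
  from measurable_Pair2[OF this, of t] have "F t \<in> borel_measurable lborel" by simp
  then show ?thesis by (simp add: measurable_restrict_space1 measurable_completion)
qed

lemma L2L2_measurable_nn_integral:
  assumes "L2L2 T \<Omega> F" and "\<Omega> \<in> sets borel"
  shows "(\<lambda>t. \<integral>\<^sup>+x\<in>\<Omega>. ennreal ((cmod (F t x))\<^sup>2) \<partial>lebesgue) \<in> borel_measurable lborel"
proof -
  have [measurable]: "(\<lambda>(t, x). F t x) \<in> borel_measurable (lborel \<Otimes>\<^sub>M lborel)" "\<Omega> \<in> sets lborel"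
    using assms unfolding L2L2_def by auto
  show ?thesis by (simp add: nn_integral_completion)
qed

lemma L2L2_AE_L2:
  assumes F: "L2L2 T \<Omega> F" and \<Omega>: "\<Omega> \<in> sets borel"
  shows "AE t in lborel. t \<in> {0..T} \<longrightarrow> L2 \<Omega> (F t)"
proof -
  define N where "N = (\<lambda>t. \<integral>\<^sup>+x\<in>\<Omega>. ennreal ((cmod (F t x))\<^sup>2) \<partial>lebesgue)"
  have "(\<lambda>t. N t * indicator {0..T} t) \<in> borel_measurable lborel"
    using L2L2_measurable_nn_integral[OF assms] unfolding N_def by measurable
  moreover have "(\<integral>\<^sup>+t. N t * indicator {0..T} t \<partial>lborel) \<noteq> \<infinity>"
    using F unfolding L2L2_def N_def by (simp add: less_top)
  ultimately have "AE t in lborel. N t * indicator {0..T} t \<noteq> \<infinity>"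
    by (rule nn_integral_PInf_AE)
  then show ?thesis
  proof eventually_elim
    case (elim t)
    have "N t = (\<integral>\<^sup>+x. ennreal ((cmod (F t x))\<^sup>2) \<partial>lebesgue_on \<Omega>)"
      unfolding N_def using \<Omega> by (simp add: nn_integral_restrict_space)
    then show ?case
      using elim \<Omega> L2L2_section_measurable[OF F] by (auto simp: L2_iff top.not_eq_extremum)
  qed
qed

lemma L2L2_energy_identity:
  fixes U V :: "real \<Rightarrow> 'a::euclidean_space \<Rightarrow> complex"
  assumes \<Omega>: "\<Omega> \<in> sets borel" and V: "L2L2 T \<Omega> V"
    and U0: "U0 \<in> borel_measurable (lebesgue_on \<Omega>)"
    and U: "\<forall>t\<in>{0..T}. L2 \<Omega> (U t)"
    and U_integral: "\<forall>t\<in>{0..T}. AE x in lebesgue_on \<Omega>. set_integrable lborel {0..t} (\<lambda>s. V s x)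
           \<and> U t x = U0 x + (LINT s:{0..t}|lborel. V s x)"
    and \<tau>: "\<tau> \<in> {0..T}"
  shows "set_integrable lborel {0..\<tau>} (\<lambda>s. l2inner \<Omega> (V s) (U s))"
    and "(l2norm \<Omega> (U \<tau>))\<^sup>2 = (l2norm \<Omega> U0)\<^sup>2 + 2 * (LINT s:{0..\<tau>}|lborel. l2inner \<Omega> (V s) (U s))"
proof -
  define M where "M = lebesgue_on \<Omega>"
  have \<Omega>': "\<Omega> \<in> sets lebesgue" using \<Omega> by auto
  have id: "(\<lambda>x. x) \<in> measurable M lborel"
    unfolding M_def by (simp add: measurable_restrict_space1 measurable_completion)
  have pair: "(\<lambda>p. (fst p, snd p)) \<in> measurable (lborel \<Otimes>\<^sub>M M) (lborel \<Otimes>\<^sub>M lborel)"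
    by (rule measurable_Pair[OF measurable_fst measurable_compose[OF measurable_snd id]])
  have "(\<lambda>(t, x). V t x) \<in> borel_measurable (lborel \<Otimes>\<^sub>M lborel)"
    using V unfolding L2L2_def by simp
  from measurable_compose[OF pair this]
  have V_measurable: "(\<lambda>(t, x). V t x) \<in> borel_measurable (lborel \<Otimes>\<^sub>M M)"
    by (simp only: case_prod_beta' fst_conv snd_conv)
  have V_L2: "(\<integral>\<^sup>+t\<in>{0..T}. (\<integral>\<^sup>+x. ennreal ((cmod (V t x))\<^sup>2) \<partial>M) \<partial>lborel) < \<infinity>"
    using V \<Omega>' unfolding L2L2_def M_def by (simp add: nn_integral_restrict_space)
  have "0 \<in> {0..T}" using \<tau> by auto
  have integral_0: "(LINT s:{0..0}|lborel. V s x) = 0" for x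
    unfolding set_lebesgue_integral_def
    by (rule integral_eq_zero_AE, rule eventually_mono[OF AE_lborel_singleton[of 0]]) simp
  have "AE x in M. U 0 x = U0 x"
    using bspec[OF U_integral \<open>0 \<in> {0..T}\<close>] unfolding M_def integral_0
    by (rule eventually_mono) simp
  then have "(\<integral>\<^sup>+x. ennreal ((cmod (U0 x))\<^sup>2) \<partial>M) = (\<integral>\<^sup>+x. ennreal ((cmod (U 0 x))\<^sup>2) \<partial>M)"
    by (intro nn_integral_cong_AE) auto
  then have U0_L2: "L2 \<Omega> U0"
    using U \<open>0 \<in> {0..T}\<close> U0 \<Omega>' by (simp add: L2_iff M_def)
  note identity = energy_identity[OF sigma_finite_lebesgue_on[OF \<Omega>'] V_measurable[unfolded M_def]
      V_L2[unfolded M_def] U0 _ _ _ \<tau>]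
  have "(\<integral>\<^sup>+x. ennreal ((cmod (U0 x))\<^sup>2) \<partial>lebesgue_on \<Omega>) < \<infinity>" using U0_L2 \<Omega>' by (simp add: L2_iff)
  moreover have "U t \<in> borel_measurable (lebesgue_on \<Omega>)" if "t \<in> {0..T}" for t
    using U that \<Omega>' by (simp add: L2_iff)
  ultimately show "set_integrable lborel {0..\<tau>} (\<lambda>s. l2inner \<Omega> (V s) (U s))"
    and "(l2norm \<Omega> (U \<tau>))\<^sup>2 = (l2norm \<Omega> U0)\<^sup>2 + 2 * (LINT s:{0..\<tau>}|lborel. l2inner \<Omega> (V s) (U s))"
    using identity U_integral U \<tau>
    by (simp_all add: l2inner_eq_integral[OF \<Omega>'] l2norm_power2(1)[OF \<Omega>'] U0_L2)
qed

section \<open>Rotation invariance of \<open>\<phi>\<close>\<close>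

definition rotate_pair :: "complex \<Rightarrow> 'a::real_normed_vector \<times> 'a \<Rightarrow> 'a \<times> 'a" where
  "rotate_pair c g = (Re c *\<^sub>R fst g - Im c *\<^sub>R snd g, Im c *\<^sub>R fst g + Re c *\<^sub>R snd g)"

lemma cgrad_mult_left: "cgrad (\<lambda>v. c * D v) = rotate_pair c (cgrad D)"
  unfolding cgrad_def rotate_pair_def
  by (simp add: scaleR_sum_right sum_subtractf sum.distrib algebra_simps)

lemma rotate_pair_diff: "rotate_pair c g - rotate_pair c h = rotate_pair c (g - h)"
  unfolding rotate_pair_def by (simp add: algebra_simps)

lemma norm_rotate_pair:
  fixes g :: "'a::real_inner \<times> 'a"
  assumes "cmod c = 1"
  shows "norm (rotate_pair c g) = norm g"
proof -
  have c: "(Re c)\<^sup>2 + (Im c)\<^sup>2 = 1" using assms by (simp add: cmod_def)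
  obtain x y where g: "g = (x, y)" by (cases g)
  have "(norm (Re c *\<^sub>R x - Im c *\<^sub>R y))\<^sup>2 + (norm (Im c *\<^sub>R x + Re c *\<^sub>R y))\<^sup>2
      = ((Re c)\<^sup>2 + (Im c)\<^sup>2) * ((norm x)\<^sup>2 + (norm y)\<^sup>2)"
    unfolding power2_norm_eq_inner
    by (simp add: inner_diff_left inner_diff_right inner_add_left inner_add_right inner_commute
        power2_eq_square algebra_simps)
  then show ?thesis unfolding g rotate_pair_def norm_Pair using c by simp
qed

lemma C1c_mult_left:
  assumes "C1c \<Omega> f f'" and "c \<noteq> 0"
  shows "C1c \<Omega> (\<lambda>x. c * f x) (\<lambda>x v. c * f' x v)"
proof -
  have "{x. c * f x \<noteq> 0} = {x. f x \<noteq> 0}" using \<open>c \<noteq> 0\<close> by auto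
  then show ?thesis
    using assms unfolding C1c_def by (auto intro: has_derivative_mult_right continuous_intros)
qed

lemma W0grad_mult_unimodular:
  assumes W: "W0grad p \<Omega> U G" and c: "cmod c = 1"
  shows "W0grad p \<Omega> (\<lambda>x. c * U x) (\<lambda>x. rotate_pair c (G x))"
proof -
  from W obtain \<phi> \<phi>' where U: "U \<in> borel_measurable (lebesgue_on \<Omega>)"
    and G: "G \<in> borel_measurable (lebesgue_on \<Omega>)"
    and \<phi>: "\<And>k. C1c \<Omega> (\<phi> k) (\<phi>' k)"
    and lim: "(\<lambda>k. \<integral>\<^sup>+x\<in>\<Omega>. ennreal (cmod (\<phi> k x - U x) powr p) \<partial>lebesgue) \<longlonglongrightarrow> 0"
    and lim': "(\<lambda>k. \<integral>\<^sup>+x\<in>\<Omega>. ennreal (norm (cgrad (\<phi>' k x) - G x) powr p) \<partial>lebesgue) \<longlonglongrightarrow> 0"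
    unfolding W0grad_def by blast
  have "continuous_on UNIV (rotate_pair c :: 'a \<times> 'a \<Rightarrow> _)"
    unfolding rotate_pair_def by (intro continuous_intros)
  from borel_measurable_continuous_on[OF this G]
  have "(\<lambda>x. rotate_pair c (G x)) \<in> borel_measurable (lebesgue_on \<Omega>)" .
  moreover have "(\<lambda>x. c * U x) \<in> borel_measurable (lebesgue_on \<Omega>)" using U by measurable
  moreover have "C1c \<Omega> (\<lambda>x. c * \<phi> k x) (\<lambda>x v. c * \<phi>' k x v)" for k
    using c by (intro C1c_mult_left \<phi>) auto
  moreover have "cmod (c * \<phi> k x - c * U x) = cmod (\<phi> k x - U x)" for k x
    by (metis c mult.left_neutral norm_mult right_diff_distrib)
  moreover have "norm (cgrad (\<lambda>v. c * \<phi>' k x v) - rotate_pair c (G x)) = norm (cgrad (\<phi>' k x) - G x)" for k x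
    unfolding cgrad_mult_left rotate_pair_diff by (rule norm_rotate_pair[OF c])
  ultimately show ?thesis
    unfolding W0grad_def using lim lim'
    by (intro conjI exI[of _ "\<lambda>k x. c * \<phi> k x"] exI[of _ "\<lambda>k x v. c * \<phi>' k x v"]) simp_all
qed

lemma Lr_mult_unimodular: "cmod c = 1 \<Longrightarrow> Lr r \<Omega> U \<Longrightarrow> Lr r \<Omega> (\<lambda>x. c * U x)"
  unfolding Lr_def by (auto simp: norm_mult)

lemma phi_mult_unimodular_le:
  assumes c: "cmod c = 1"
  shows "phi p \<Omega> (\<lambda>x. c * U x) \<le> phi p \<Omega> U"
proof (cases "L2 \<Omega> U \<and> W0 p \<Omega> U")
  case True
  then have "L2 \<Omega> (\<lambda>x. c * U x)" and "W0 p \<Omega> (\<lambda>x. c * U x)"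
    using Lr_mult_unimodular[OF c] W0grad_mult_unimodular[OF _ c] unfolding W0_def by blast+
  moreover have "(INF G\<in>{G. W0grad p \<Omega> (\<lambda>x. c * U x) G}. ennreal (1/p) * (\<integral>\<^sup>+x\<in>\<Omega>. ennreal (norm (G x) powr p) \<partial>lebesgue))
     \<le> (INF G\<in>{G. W0grad p \<Omega> U G}. ennreal (1/p) * (\<integral>\<^sup>+x\<in>\<Omega>. ennreal (norm (G x) powr p) \<partial>lebesgue))"
  proof (rule INF_mono)
    fix G assume "G \<in> {G. W0grad p \<Omega> U G}"
    then show "\<exists>G'\<in>{G. W0grad p \<Omega> (\<lambda>x. c * U x) G}.
        ennreal (1/p) * (\<integral>\<^sup>+x\<in>\<Omega>. ennreal (norm (G' x) powr p) \<partial>lebesgue)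
          \<le> ennreal (1/p) * (\<integral>\<^sup>+x\<in>\<Omega>. ennreal (norm (G x) powr p) \<partial>lebesgue)"
      using W0grad_mult_unimodular[OF _ c]
      by (intro bexI[of _ "\<lambda>x. rotate_pair c (G x)"]) (auto simp: norm_rotate_pair[OF c])
  qed
  ultimately show ?thesis using True unfolding phi_def by simp
next
  case False
  then have "phi p \<Omega> U = \<infinity>" unfolding phi_def by (simp only: if_False)
  then show ?thesis by simp
qed

lemma phi_mult_unimodular:
  assumes c: "cmod c = 1"
  shows "phi p \<Omega> (\<lambda>x. c * U x) = phi p \<Omega> U"
proof (rule antisym)
  have "cnj c * c = 1" using c by (simp add: complex_norm_square[symmetric] mult.commute)
  then have "(\<lambda>x. cnj c * (c * U x)) = U" by (auto simp: mult.assoc[symmetric])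
  then show "phi p \<Omega> U \<le> phi p \<Omega> (\<lambda>x. c * U x)"
    using phi_mult_unimodular_le[of "cnj c" p \<Omega> "\<lambda>x. c * U x"] c by simp
qed (rule phi_mult_unimodular_le[OF c])

text \<open>Testing the subgradient inequality with the rotations \<open>c J\<close>, \<open>|c| = 1\<close>, on which \<open>\<Phi>\<close>
  takes the same value, gives \<open>(Re c - 1) a \<le> Im c b\<close> for \<open>a + i b = \<integral> cnj Y J\<close>; hence \<open>b = 0\<close>.\<close>
lemma subdiff_rotation_invariant_orthogonal:
  assumes \<Omega>: "\<Omega> \<in> sets lebesgue"
    and invariant: "\<And>c. cmod c = 1 \<Longrightarrow> \<Phi> (\<lambda>x. c * J x) = \<Phi> J"
    and Y: "Y \<in> subdiff \<Omega> \<Phi> J"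
  shows "l2inner \<Omega> Y (\<lambda>x. \<i> * J x) = 0"
proof -
  from Y have J: "L2 \<Omega> J" and "L2 \<Omega> Y" and finite: "\<Phi> J < \<infinity>"
    and subgradient: "\<And>W. L2 \<Omega> W \<Longrightarrow> \<Phi> W < \<infinity> \<Longrightarrow>
         l2inner \<Omega> Y (\<lambda>x. W x - J x) \<le> enn2real (\<Phi> W) - enn2real (\<Phi> J)"
    unfolding subdiff_def by auto
  define M where "M = lebesgue_on \<Omega>"
  have YJ: "integrable M (\<lambda>x. cnj (Y x) * J x)"
    unfolding M_def using L2_cnj_mult_integrable[OF \<Omega> \<open>L2 \<Omega> Y\<close> J] .
  define a where "a = (\<integral>x. Re (cnj (Y x) * J x) \<partial>M)"
  define b where "b = (\<integral>x. Im (cnj (Y x) * J x) \<partial>M)"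
  have "(Re c - 1) * a - Im c * b \<le> 0" if c: "cmod c = 1" for c
  proof -
    have "l2inner \<Omega> Y (\<lambda>x. c * J x - J x)
        = (\<integral>x. (Re c - 1) * Re (cnj (Y x) * J x) - Im c * Im (cnj (Y x) * J x) \<partial>M)"
      unfolding l2inner_eq_integral[OF \<Omega>] M_def
      by (rule Bochner_Integration.integral_cong) (auto simp: algebra_simps)
    also have "\<dots> = (\<integral>x. (Re c - 1) * Re (cnj (Y x) * J x) \<partial>M) - (\<integral>x. Im c * Im (cnj (Y x) * J x) \<partial>M)"
      using YJ by (intro Bochner_Integration.integral_diff integrable_mult_right integrable_Re integrable_Im)
    also have "\<dots> = (Re c - 1) * a - Im c * b"
      unfolding a_def b_def by (simp only: integral_mult_right_zero)
    finally show ?thesis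
      using subgradient[OF Lr_mult_unimodular[OF c J]] invariant[OF c] finite by simp
  qed
  then have "b = 0" by (rule unit_circle_bound_imp_eq_0)
  moreover have "l2inner \<Omega> Y (\<lambda>x. \<i> * J x) = - b"
    unfolding l2inner_eq_integral[OF \<Omega>] b_def M_def
    by (simp flip: integral_minus)
  ultimately show ?thesis by simp
qed

lemma subdiff_phi_orthogonal_rotation:
  assumes "\<Omega> \<in> sets lebesgue" and "Y \<in> subdiff \<Omega> (phi p \<Omega>) J"
  shows "l2inner \<Omega> Y (\<lambda>x. \<i> * J x) = 0"
  using assms by (intro subdiff_rotation_invariant_orthogonal) (auto simp: phi_mult_unimodular)

lemma W0grad_zero: "W0grad p \<Omega> (\<lambda>x. 0) (\<lambda>x. 0)"
proof -
  have C1c: "C1c \<Omega> (\<lambda>x. 0) (\<lambda>x v. 0)" unfolding C1c_def by simp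
  have cgrad: "cgrad (\<lambda>v. 0) = (0, 0)" unfolding cgrad_def by simp
  show ?thesis unfolding W0grad_def
    by (intro conjI exI[of _ "\<lambda>k x. 0"] exI[of _ "\<lambda>k x v. 0"]) (simp_all add: C1c cgrad)
qed

lemma phi_zero: "phi p \<Omega> (\<lambda>x. 0) = 0"
proof -
  have "(INF G\<in>{G. W0grad p \<Omega> (\<lambda>x. 0) G}. ennreal (1/p) * (\<integral>\<^sup>+x\<in>\<Omega>. ennreal (norm (G x) powr p) \<partial>lebesgue))
      \<le> ennreal (1/p) * (\<integral>\<^sup>+x\<in>\<Omega>. ennreal (norm ((\<lambda>x. (0::'a \<times> 'a)) x) powr p) \<partial>lebesgue)"
    by (rule INF_lower) (simp add: W0grad_zero)
  moreover have "L2 \<Omega> (\<lambda>x. 0)" and "W0 p \<Omega> (\<lambda>x. 0)"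
    using Lr_zero W0grad_zero unfolding W0_def by blast+
  ultimately show ?thesis unfolding phi_def by simp
qed

lemma psi_zero: "psi q \<Omega> (\<lambda>x. 0) = 0"
  unfolding psi_def using Lr_zero[of 2 \<Omega>] Lr_zero[of q \<Omega>] by simp

lemma subdiff_l2inner_nonneg:
  assumes \<Omega>: "\<Omega> \<in> sets lebesgue" and A: "A \<in> subdiff \<Omega> \<Phi> U" and \<Phi>: "\<Phi> (\<lambda>x. 0) = 0"
  shows "0 \<le> l2inner \<Omega> A U"
proof -
  from A have "l2inner \<Omega> A (\<lambda>x. 0 - U x) \<le> enn2real (\<Phi> (\<lambda>x. 0)) - enn2real (\<Phi> U)"
    unfolding subdiff_def using Lr_zero[of 2 \<Omega>] \<Phi> by auto
  moreover have "l2inner \<Omega> A (\<lambda>x. 0 - U x) = - l2inner \<Omega> A U"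
    unfolding l2inner_eq_integral[OF \<Omega>] by (simp flip: integral_minus)
  ultimately have "enn2real (\<Phi> U) \<le> l2inner \<Omega> A U" using \<Phi> by simp
  then show ?thesis using enn2real_nonneg[of "\<Phi> U"] by linarith
qed

text \<open>With \<open>J = U - \<nu> Y\<close> the resolvent, \<open>Y \<in> \<partial>\<phi>(J)\<close> is orthogonal to \<open>\<i> J\<close>, and trivially to \<open>\<i> Y\<close>.\<close>
lemma yosida_phi_orthogonal_rotation:
  assumes \<Omega>: "\<Omega> \<in> sets lebesgue" and Y: "Y \<in> yosida \<Omega> (phi p \<Omega>) \<nu> U"
  shows "l2inner \<Omega> Y (\<lambda>x. \<i> * U x) = 0"
proof -
  define J where "J = (\<lambda>x. U x - complex_of_real \<nu> * Y x)"
  have "Y \<in> subdiff \<Omega> (phi p \<Omega>) J" using Y unfolding yosida_def J_def by auto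
  then have "l2inner \<Omega> Y (\<lambda>x. \<i> * J x) = 0" by (rule subdiff_phi_orthogonal_rotation[OF \<Omega>])
  moreover have "Re (cnj (Y x) * (\<i> * U x)) = Re (cnj (Y x) * (\<i> * J x))" for x
    unfolding J_def by (simp add: algebra_simps)
  ultimately show ?thesis unfolding l2inner_def by simp
qed

section \<open>The energy estimate\<close>

lemma two_Re_cnj_mult_le_energy_terms:
  assumes "v = f - a - complex_of_real \<alpha> * \<i> * y - d - b0"
  shows "2 * Re (cnj v * u) \<le> (cmod f)\<^sup>2 + 3 * (cmod u)\<^sup>2 + (cmod d)\<^sup>2 + (cmod b0)\<^sup>2
           - 2 * Re (cnj a * u) + 2 * \<alpha> * Re (cnj y * (\<i> * u))"
proof -
  have "2 * Re (cnj v * u) = 2 * Re (cnj f * u) - 2 * Re (cnj a * u)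
      + 2 * \<alpha> * Re (cnj y * (\<i> * u)) + 2 * Re (cnj (- d) * u) + 2 * Re (cnj (- b0) * u)"
    unfolding assms by (simp add: algebra_simps)
  then show ?thesis
    using Re_cnj_mult_le[of f u] Re_cnj_mult_le[of "- d" u] Re_cnj_mult_le[of "- b0" u] by simp
qed

lemma energy_rate_bound:
  assumes \<Omega>: "\<Omega> \<in> sets lebesgue"
    and A: "A \<in> subdiff \<Omega> \<Phi> U" and \<Phi>: "\<Phi> (\<lambda>x. 0) = 0"
    and Y: "Y \<in> yosida \<Omega> (phi p \<Omega>) \<nu> U"
    and V: "L2 \<Omega> V" and F: "L2 \<Omega> F" and BU: "L2 \<Omega> BU" and B0: "L2 \<Omega> B0"
    and equation: "AE x in lebesgue_on \<Omega>. V x + A x + complex_of_real \<alpha> * \<i> * Y x + BU x = F x"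
    and lipschitz: "l2norm \<Omega> (\<lambda>x. BU x - B0 x) \<le> LB * l2norm \<Omega> U" and LB: "0 \<le> LB"
  shows "2 * l2inner \<Omega> V U \<le> (l2norm \<Omega> F)\<^sup>2 + (3 + LB\<^sup>2) * (l2norm \<Omega> U)\<^sup>2 + (l2norm \<Omega> B0)\<^sup>2"
proof -
  define M where "M = lebesgue_on \<Omega>"
  define D where "D = (\<lambda>x. BU x - B0 x)"
  have U: "L2 \<Omega> U" and "L2 \<Omega> A" using A unfolding subdiff_def by auto
  have "L2 \<Omega> Y" using Y unfolding yosida_def subdiff_def by auto
  have D: "L2 \<Omega> D" unfolding D_def using L2_diff[OF \<Omega> BU B0] .
  have iU: "L2 \<Omega> (\<lambda>x. \<i> * U x)" using Lr_mult_unimodular[of \<i>] U by simp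
  have pointwise: "AE x in M. 2 * Re (cnj (V x) * U x)
      \<le> (cmod (F x))\<^sup>2 + 3 * (cmod (U x))\<^sup>2 + (cmod (D x))\<^sup>2 + (cmod (B0 x))\<^sup>2
         - 2 * Re (cnj (A x) * U x) + 2 * \<alpha> * Re (cnj (Y x) * (\<i> * U x))"
    using equation unfolding M_def
    by eventually_elim (rule two_Re_cnj_mult_le_energy_terms, simp add: D_def algebra_simps)
  note sq = L2_imp_integrable_power2[OF \<Omega>, folded M_def]
  note inner = integrable_Re[OF L2_cnj_mult_integrable[OF \<Omega>], folded M_def]
  have "2 * l2inner \<Omega> V U = (\<integral>x. 2 * Re (cnj (V x) * U x) \<partial>M)"
    unfolding l2inner_eq_integral[OF \<Omega>] M_def by (simp only: integral_mult_right_zero)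
  also have "\<dots> \<le> (\<integral>x. (cmod (F x))\<^sup>2 + 3 * (cmod (U x))\<^sup>2 + (cmod (D x))\<^sup>2 + (cmod (B0 x))\<^sup>2
         - 2 * Re (cnj (A x) * U x) + 2 * \<alpha> * Re (cnj (Y x) * (\<i> * U x)) \<partial>M)"
    by (intro integral_mono_AE pointwise Bochner_Integration.integrable_add
        Bochner_Integration.integrable_diff integrable_mult_right sq[OF F] sq[OF U] sq[OF D] sq[OF B0]
        inner[OF V U] inner[OF \<open>L2 \<Omega> A\<close> U] inner[OF \<open>L2 \<Omega> Y\<close> iU])
  also have "\<dots> = (l2norm \<Omega> F)\<^sup>2 + 3 * (l2norm \<Omega> U)\<^sup>2 + (l2norm \<Omega> D)\<^sup>2 + (l2norm \<Omega> B0)\<^sup>2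
         - 2 * l2inner \<Omega> A U + 2 * \<alpha> * l2inner \<Omega> Y (\<lambda>x. \<i> * U x)"
  proof -
    \<comment> \<open>Stated for abstract integrands, so that \<open>simp\<close> cannot unfold the \<open>Re (cnj _ * _)\<close> terms.\<close>
    have linear: "(\<integral>x. f1 x + 3 * f2 x + f3 x + f4 x - 2 * f5 x + 2 * \<alpha> * f6 x \<partial>M)
        = integral\<^sup>L M f1 + 3 * integral\<^sup>L M f2 + integral\<^sup>L M f3 + integral\<^sup>L M f4
          - 2 * integral\<^sup>L M f5 + 2 * \<alpha> * integral\<^sup>L M f6"
      if "integrable M f1" "integrable M f2" "integrable M f3" "integrable M f4"
        "integrable M f5" "integrable M f6" for f1 f2 f3 f4 f5 f6 :: "'a \<Rightarrow> real"
      using that by simp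
    show ?thesis
      unfolding l2inner_eq_integral[OF \<Omega>] l2norm_power2(1)[OF \<Omega> F] l2norm_power2(1)[OF \<Omega> U]
        l2norm_power2(1)[OF \<Omega> D] l2norm_power2(1)[OF \<Omega> B0] M_def[symmetric]
      by (rule linear[OF sq[OF F] sq[OF U] sq[OF D] sq[OF B0] inner[OF \<open>L2 \<Omega> A\<close> U]
          inner[OF \<open>L2 \<Omega> Y\<close> iU]])
  qed
  finally have "2 * l2inner \<Omega> V U \<le> (l2norm \<Omega> F)\<^sup>2 + 3 * (l2norm \<Omega> U)\<^sup>2 + (l2norm \<Omega> D)\<^sup>2
      + (l2norm \<Omega> B0)\<^sup>2 - 2 * l2inner \<Omega> A U + 2 * \<alpha> * l2inner \<Omega> Y (\<lambda>x. \<i> * U x)" .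
  moreover have "(l2norm \<Omega> D)\<^sup>2 \<le> (LB * l2norm \<Omega> U)\<^sup>2"
    using lipschitz unfolding D_def by (intro power_mono) (simp_all add: l2norm_def)
  ultimately show ?thesis
    using yosida_phi_orthogonal_rotation[OF \<Omega> Y] subdiff_l2inner_nonneg[OF \<Omega> A \<Phi>]
    by (simp add: algebra_simps power_mult_distrib)
qed

lemma energy_rate_bound_AE:
  fixes U V :: "real \<Rightarrow> 'a::euclidean_space \<Rightarrow> complex"
  assumes \<Omega>: "\<Omega> \<in> sets borel" and V: "L2L2 T \<Omega> V" and F: "L2L2 T \<Omega> F"
    and U: "\<forall>t\<in>{0..T}. L2 \<Omega> (U t)" and B: "\<forall>W. L2 \<Omega> W \<longrightarrow> L2 \<Omega> (B W)"
    and lipschitz: "\<forall>W. L2 \<Omega> W \<longrightarrow> l2norm \<Omega> (\<lambda>x. B W x - B (\<lambda>x. 0) x) \<le> LB * l2norm \<Omega> W"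
    and LB: "0 \<le> LB"
    and equation: "AE t in lborel. t \<in> {0<..<T} \<longrightarrow>
           (\<exists>A Y. A \<in> subdiff \<Omega> (\<lambda>W. ennreal lam * phi p \<Omega> W + ennreal kap * psi q \<Omega> W) (U t) \<and>
                  Y \<in> yosida \<Omega> (phi p \<Omega>) \<nu> (U t) \<and>
                  (AE x in lebesgue_on \<Omega>. V t x + A x + complex_of_real \<alpha> * \<i> * Y x + B (U t) x = F t x))"
  shows "AE t in lborel. t \<in> {0<..<T} \<longrightarrow> ennreal (2 * l2inner \<Omega> (V t) (U t))
           \<le> (\<integral>\<^sup>+x\<in>\<Omega>. ennreal ((cmod (F t x))\<^sup>2) \<partial>lebesgue)
              + ennreal ((3 + LB\<^sup>2) * (l2norm \<Omega> (U t))\<^sup>2 + (l2norm \<Omega> (B (\<lambda>x. 0)))\<^sup>2)"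
  using equation L2L2_AE_L2[OF V \<Omega>] L2L2_AE_L2[OF F \<Omega>]
proof eventually_elim
  case (elim t)
  show ?case
  proof
    assume t: "t \<in> {0<..<T}"
    then obtain A Y where
      A: "A \<in> subdiff \<Omega> (\<lambda>W. ennreal lam * phi p \<Omega> W + ennreal kap * psi q \<Omega> W) (U t)"
      and Y: "Y \<in> yosida \<Omega> (phi p \<Omega>) \<nu> (U t)"
      and eq: "AE x in lebesgue_on \<Omega>. V t x + A x + complex_of_real \<alpha> * \<i> * Y x + B (U t) x = F t x"
      using elim by auto
    have \<Omega>': "\<Omega> \<in> sets lebesgue" using \<Omega> by auto
    have Ut: "L2 \<Omega> (U t)" and Ft: "L2 \<Omega> (F t)" using t U elim by auto
    have "2 * l2inner \<Omega> (V t) (U t)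
        \<le> (l2norm \<Omega> (F t))\<^sup>2 + (3 + LB\<^sup>2) * (l2norm \<Omega> (U t))\<^sup>2 + (l2norm \<Omega> (B (\<lambda>x. 0)))\<^sup>2"
    proof (rule energy_rate_bound[OF \<Omega>' A _ Y _ Ft _ _ eq _ LB])
      show "(\<lambda>W. ennreal lam * phi p \<Omega> W + ennreal kap * psi q \<Omega> W) (\<lambda>x. 0) = 0"
        by (simp add: phi_zero psi_zero)
    qed (use t elim B lipschitz Ut Lr_zero in auto)
    moreover have "(\<integral>\<^sup>+x\<in>\<Omega>. ennreal ((cmod (F t x))\<^sup>2) \<partial>lebesgue) = ennreal ((l2norm \<Omega> (F t))\<^sup>2)"
      using l2norm_power2(2)[OF \<Omega>' Ft] \<Omega>' by (simp add: nn_integral_restrict_space)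
    ultimately show "ennreal (2 * l2inner \<Omega> (V t) (U t))
           \<le> (\<integral>\<^sup>+x\<in>\<Omega>. ennreal ((cmod (F t x))\<^sup>2) \<partial>lebesgue)
              + ennreal ((3 + LB\<^sup>2) * (l2norm \<Omega> (U t))\<^sup>2 + (l2norm \<Omega> (B (\<lambda>x. 0)))\<^sup>2)"
      by (simp add: ennreal_plus[symmetric] add.assoc del: ennreal_plus)
  qed
qed

lemma solution_L2_bound:
  fixes U :: "real \<Rightarrow> 'a::euclidean_space \<Rightarrow> complex"
  assumes \<Omega>: "\<Omega> \<in> sets borel" and F: "L2L2 T \<Omega> F"
    and B: "\<forall>W. L2 \<Omega> W \<longrightarrow> L2 \<Omega> (B W)"
    and lipschitz: "\<forall>W. L2 \<Omega> W \<longrightarrow> l2norm \<Omega> (\<lambda>x. B W x - B (\<lambda>x. 0) x) \<le> LB * l2norm \<Omega> W"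
    and LB: "0 \<le> LB"
    and U0: "U0 \<in> borel_measurable (lebesgue_on \<Omega>)"
    and solution: "is_solution \<Omega> p q lam kap \<alpha> \<nu> T B F U0 U"
    and t: "t \<in> {0..T}"
  shows "(l2norm \<Omega> (U t))\<^sup>2 \<le> ((l2norm \<Omega> U0)\<^sup>2 + L2L2norm_sq T \<Omega> F + (l2norm \<Omega> (B (\<lambda>x. 0)))\<^sup>2 * T)
           * exp ((3 + LB\<^sup>2) * T)"
proof -
  from solution obtain V where V: "L2L2 T \<Omega> V" and U: "\<forall>t\<in>{0..T}. L2 \<Omega> (U t)"
    and U_integral: "\<forall>t\<in>{0..T}. AE x in lebesgue_on \<Omega>. set_integrable lborel {0..t} (\<lambda>s. V s x)
           \<and> U t x = U0 x + (LINT s:{0..t}|lborel. V s x)"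
    and equation: "AE t in lborel. t \<in> {0<..<T} \<longrightarrow>
           (\<exists>A Y. A \<in> subdiff \<Omega> (\<lambda>W. ennreal lam * phi p \<Omega> W + ennreal kap * psi q \<Omega> W) (U t) \<and>
                  Y \<in> yosida \<Omega> (phi p \<Omega>) \<nu> (U t) \<and>
                  (AE x in lebesgue_on \<Omega>. V t x + A x + complex_of_real \<alpha> * \<i> * Y x + B (U t) x = F t x))"
    unfolding is_solution_def by blast
  note identity = L2L2_energy_identity[OF \<Omega> V U0 U U_integral]
  show ?thesis
  proof (rule gronwall_integrated_energy_inequality[where g="\<lambda>t. (l2norm \<Omega> (U t))\<^sup>2"
        and h="\<lambda>s. 2 * l2inner \<Omega> (V s) (U s)" and N="\<lambda>t. \<integral>\<^sup>+x\<in>\<Omega>. ennreal ((cmod (F t x))\<^sup>2) \<partial>lebesgue"])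
    show "set_integrable lborel {0..\<tau>} (\<lambda>s. 2 * l2inner \<Omega> (V s) (U s)) \<and>
        (l2norm \<Omega> (U \<tau>))\<^sup>2 = (l2norm \<Omega> U0)\<^sup>2 + (LINT s:{0..\<tau>}|lborel. 2 * l2inner \<Omega> (V s) (U s))"
      if "\<tau> \<in> {0..T}" for \<tau>
      using identity[OF that] by (simp add: set_integral_mult_right)
    show "(\<integral>\<^sup>+s\<in>{0..T}. (\<integral>\<^sup>+x\<in>\<Omega>. ennreal ((cmod (F s x))\<^sup>2) \<partial>lebesgue) \<partial>lborel)
        \<le> ennreal (L2L2norm_sq T \<Omega> F)"
      using F unfolding L2L2_def L2L2norm_sq_def by (simp add: less_top)
  qed (use energy_rate_bound_AE[OF \<Omega> V F U B lipschitz LB equation] L2L2_measurable_nn_integral[OF F \<Omega>]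
      LB t in \<open>simp_all add: L2L2norm_sq_def\<close>)
qed

theorem lemma5p2:
  shows "\<exists>C1 :: real \<Rightarrow> real \<Rightarrow> real \<Rightarrow> real \<Rightarrow> real \<Rightarrow> real \<Rightarrow> real \<Rightarrow> real.
    (\<forall>a b c d e f g. C1 a b c d e f g > 0) \<and>
    (\<forall>(\<Omega> :: 'a::euclidean_space set) p q lam kap \<alpha> T F B LB U0 \<nu> U.
       bounded \<Omega> \<and> C2_domain \<Omega> \<and>
       p > max 1 (2 * real DIM('a) / (real DIM('a) + 2)) \<and> q \<ge> 2 \<and>
       lam > 0 \<and> kap > 0 \<and> \<bar>\<alpha>\<bar> \<le> lam / 2 \<and> T > 0 \<and>
       L2L2 T \<Omega> F \<and>
       LB \<ge> 0 \<and> (\<forall>W. L2 \<Omega> W \<longrightarrow> L2 \<Omega> (B W)) \<and>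
       (\<forall>W1 W2. L2 \<Omega> W1 \<and> L2 \<Omega> W2 \<longrightarrow>
          l2norm \<Omega> (\<lambda>x. B W1 x - B W2 x) \<le> LB * l2norm \<Omega> (\<lambda>x. W1 x - W2 x)) \<and>
       W0 p \<Omega> U0 \<and> Lr q \<Omega> U0 \<and> \<nu> > 0 \<and>
       is_solution \<Omega> p q lam kap \<alpha> \<nu> T B F U0 U
       \<longrightarrow> (\<forall>t\<in>{0..T}. (l2norm \<Omega> (U t))\<^sup>2
              \<le> C1 lam kap LB T (l2norm \<Omega> (B (\<lambda>x. 0))) (l2norm \<Omega> U0) (L2L2norm_sq T \<Omega> F)))"
proof (rule exI[of _ "\<lambda>_ _ LB T b u0 f. (u0\<^sup>2 + \<bar>f\<bar> + b\<^sup>2 * \<bar>T\<bar>) * exp ((3 + LB\<^sup>2) * \<bar>T\<bar>) + 1"],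
    intro conjI allI impI ballI, goal_cases)
  case (1 lam kap LB T b u0 f)
  then show ?case by (simp add: add_nonneg_pos)
next
  case (2 \<Omega> p q lam kap \<alpha> T F B LB U0 \<nu> U t)
  then have "\<Omega> \<in> sets borel" by (auto simp: C2_domain_def)
  moreover have "U0 \<in> borel_measurable (lebesgue_on \<Omega>)" using 2 by (simp add: Lr_def)
  moreover have "\<forall>W. L2 \<Omega> W \<longrightarrow> l2norm \<Omega> (\<lambda>x. B W x - B (\<lambda>x. 0) x) \<le> LB * l2norm \<Omega> W"
  proof (intro allI impI)
    fix W assume "L2 \<Omega> W"
    then have "l2norm \<Omega> (\<lambda>x. B W x - B (\<lambda>x. 0) x) \<le> LB * l2norm \<Omega> (\<lambda>x. W x - 0)"
      using 2 Lr_zero[of 2 \<Omega>] by blast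
    then show "l2norm \<Omega> (\<lambda>x. B W x - B (\<lambda>x. 0) x) \<le> LB * l2norm \<Omega> W" by simp
  qed
  ultimately have "(l2norm \<Omega> (U t))\<^sup>2 \<le> ((l2norm \<Omega> U0)\<^sup>2 + L2L2norm_sq T \<Omega> F
      + (l2norm \<Omega> (B (\<lambda>x. 0)))\<^sup>2 * T) * exp ((3 + LB\<^sup>2) * T)"
    using 2 by (intro solution_L2_bound) auto
  moreover have "0 \<le> L2L2norm_sq T \<Omega> F" by (simp add: L2L2norm_sq_def)
  ultimately show ?case using 2 by simp
qed

end
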